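(* For any policy $\pi$ and budget $\Lambda$: (a) there exist a target $f\in S(\mathcal{P},\nu,\rho,d,C)$ and fidelity approximations $(f_z)_{z\in Z}\in F(\mathrm{Asm},f,\lambda)$ such that $$r_\Lambda(\pi)\ge\sup\left\{r\in\left(0,\tfrac12\nu\rho\right] : \Lambda\le\frac1K\left(\frac{2r}{\nu\rho}\right)^{-d}\inf\bar\Phi^{-1}\!\left(\left[0,\tfrac{2r}{\rho}\right]\right)\right\};$$ (b) there exist a target $f\in S(\mathcal{P},\nu,\rho,d,C)$ and fidelity approximations $(f_z)_{z\in Z}\in F(\mathrm{Asm},f,\lambda)$ such that $$r_\Lambda(\pi)\ge\sup\left\{r\in\left(0,\tfrac14\nu\rho^6\right] : \Lambda\le\left(\frac{\log\frac{\nu}{4r}}{4\log\frac1\rho}-2\right)\inf\bar\Phi^{-1}\!\left(\left[0,\tfrac{\nu}{\rho}\left(\tfrac{4r}{\nu}\right)^{1/4}\right]\right)\right\},$$ where $\inf\bar\Phi^{-1}(I)=\inf\{c\ge1:\bar\Phi(c)\in I\}$.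
   Context: $\mathcal{X}$ has a hierarchical partitioning $\mathcal{P}=(\mathcal{P}_{h,i})_{h\ge0,0\le i\le K^h-1}$, $K\ge2$ ($\mathcal{P}_{0,0}=\mathcal{X}$; the children $\mathcal{P}_{h+1,Ki+l}$, $0\le l\le K-1$, partition $\mathcal{P}_{h,i}$). Fixed: $\nu>0$, $\rho\in(0,1)$, $d\in[0,\log K/\log(1/\rho)]$, $C\ge(K\rho^d)^{\lfloor\log3/\log(1/\rho)\rfloor}$, $C>1$. $S(\mathcal{P},\nu,\rho,d,C)$: set of $f:\mathcal{X}\to\mathbb{R}$ such that for one global maximizer $x^\star$ and all $h$, each $x$ in the depth-$h$ cell containing $x^\star$ has $f(x)\ge f(x^\star)-\nu\rho^h$, and for every $h$ at most $C\rho^{-dh}$ depth-$h$ cells $\mathcal{P}_{h,i}$ satisfy $\sup_{\mathcal{P}_{h,i}}f\ge f(x^\star)-3\nu\rho^h$. Multi-fidelity: $Z=[0,1]$; bias function $\zeta:Z\to[0,+\infty]$ with strictly increasing $g_z$ and $\sup_x|f(x)-g_z(f_z(x))|\le\zeta(z)$; cost function $\lambda$; for $c\ge1$ a fidelity $z_c$ with $\lambda(z_c)\le c$; cost-to-bias $\Phi(c)=\zeta(z_c)$. $\mathrm{Asm}$ is one of: (a) $\Phi(c)\le A/c^\alpha$; (b) $\Phi(c)\le Be^{-c^\beta/\sigma}$; (c) $\Phi(c)=0$ for $c\ge a$. $F(\mathrm{Asm},f,\lambda)$: families $(f_z)$ for which some bias function makes $\mathrm{Asm}$ hold. Here $\lambda$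 is a bijective cost function, $z_c=\lambda^{-1}(c)$, and $\bar\Phi$ is the bounding function of $\mathrm{Asm}$ ($A/c^\alpha$ for (a); $Be^{-c^\beta/\sigma}$ for (b); for (c), $0$ on $[a,\infty)$ and $+\infty$ on $[1,a)$), the bias being $\zeta(z)=\bar\Phi(\lambda(z))$, so that the cost-to-bias function equals $\bar\Phi$. A policy sequentially chooses (possibly at random) points $x_t$ and fidelities $z_t$, observes $f_{z_t}(x_t)$, as long as $\sum_{s\le t}\lambda(z_s)\le\Lambda$, and outputs $x_\Lambda$; $r_\Lambda(\pi)=\mathbb{E}[\max f-f(x_\Lambda)]$. *)

theory Defs
  imports "HOL-Analysis.Analysis" "HOL-Probability.Probability"
begin

text \<open>P h i is the cell P_{h,i}; only indices i < K^h are meaningful.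
  Cells of a partition are taken to be nonempty.\<close>
definition hier_partition :: "nat \<Rightarrow> (nat \<Rightarrow> nat \<Rightarrow> 'x set) \<Rightarrow> bool" where
  "hier_partition K P \<longleftrightarrow>
     P 0 0 = UNIV \<and>
     (\<forall>h i. i < K ^ h \<longrightarrow>
        P h i \<noteq> {} \<and>
        P h i = (\<Union>l<K. P (Suc h) (K * i + l)) \<and>
        (\<forall>l<K. \<forall>l'<K. l \<noteq> l' \<longrightarrow> P (Suc h) (K * i + l) \<inter> P (Suc h) (K * i + l') = {}))"

definition fun_class ::
  "nat \<Rightarrow> (nat \<Rightarrow> nat \<Rightarrow> 'x set) \<Rightarrow> real \<Rightarrow> real \<Rightarrow> real \<Rightarrow> real \<Rightarrow> ('x \<Rightarrow> real) set" where
  "fun_class K P \<nu> \<rho> d C = {f. \<exists>xs.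
      (\<forall>x. f x \<le> f xs) \<and>
      (\<forall>h i. i < K ^ h \<and> xs \<in> P h i \<longrightarrow> (\<forall>x \<in> P h i. f x \<ge> f xs - \<nu> * \<rho> ^ h)) \<and>
      (\<forall>h. real (card {i. i < K ^ h \<and> Sup (f ` P h i) \<ge> f xs - 3 * \<nu> * \<rho> ^ h})
              \<le> C * \<rho> powr (- d * real h))}"

datatype asm =
    AsmA real real        \<comment> \<open>(a): Phi(c) <= A / c^alpha, parameters A alpha\<close>
  | AsmB real real real   \<comment> \<open>(b): Phi(c) <= B exp(- c^beta / sigma), parameters B beta sigma\<close>
  | AsmC real             \<comment> \<open>(c): Phi(c) = 0 for c >= a, parameter a\<close>

definition asm_params_ok :: "asm \<Rightarrow> bool" where
  "asm_params_ok as = (case as of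
      AsmA A \<alpha> \<Rightarrow> A > 0 \<and> \<alpha> > 0
    | AsmB B \<beta> \<sigma> \<Rightarrow> B > 0 \<and> \<beta> > 0 \<and> \<sigma> > 0
    | AsmC a \<Rightarrow> True)"

definition asm_holds :: "asm \<Rightarrow> (real \<Rightarrow> ereal) \<Rightarrow> bool" where
  "asm_holds as \<Phi> = (case as of
      AsmA A \<alpha> \<Rightarrow> (\<forall>c \<ge> 1. \<Phi> c \<le> ereal (A / c powr \<alpha>))
    | AsmB B \<beta> \<sigma> \<Rightarrow> (\<forall>c \<ge> 1. \<Phi> c \<le> ereal (B * exp (- (c powr \<beta>) / \<sigma>)))
    | AsmC a \<Rightarrow> (\<forall>c \<ge> 1. c \<ge> a \<longrightarrow> \<Phi> c = 0))"

definition Phibar :: "asm \<Rightarrow> real \<Rightarrow> ereal" where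
  "Phibar as c = (case as of
      AsmA A \<alpha> \<Rightarrow> ereal (A / c powr \<alpha>)
    | AsmB B \<beta> \<sigma> \<Rightarrow> ereal (B * exp (- (c powr \<beta>) / \<sigma>))
    | AsmC a \<Rightarrow> (if c \<ge> a then 0 else \<infinity>))"

text \<open>inf barPhi^{-1}([0,t]) = inf {c >= 1. barPhi c in [0,t]}  (= +infinity if empty).\<close>
definition inv_Phibar :: "asm \<Rightarrow> real \<Rightarrow> ereal" where
  "inv_Phibar as t = Inf {ereal c | c. c \<ge> 1 \<and> Phibar as c \<in> {0 .. ereal t}}"

text \<open>Fidelity space Z = [0,1]; bijective cost lam : Z -> [1,oo), z_c = lam^{-1}(c).
  F(Asm, f, lam): families (f_z) admitting a bias function zeta : Z -> [0,+oo]
  and strictly increasing g_z with sup_x |f x - g_z (f_z x)| <= zeta z, such that the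
  cost-to-bias function Phi(c) = zeta(z_c) satisfies Asm.\<close>
definition fid_class :: "asm \<Rightarrow> ('x \<Rightarrow> real) \<Rightarrow> (real \<Rightarrow> real) \<Rightarrow> (real \<Rightarrow> 'x \<Rightarrow> real) set" where
  "fid_class as f lam = {fz. \<exists>\<zeta> :: real \<Rightarrow> ereal. \<exists>g :: real \<Rightarrow> real \<Rightarrow> real.
      (\<forall>z \<in> {0..1}. \<zeta> z \<ge> 0) \<and>
      (\<forall>z \<in> {0..1}. strict_mono (g z) \<and> (\<forall>x. ereal \<bar>f x - g z (fz z x)\<bar> \<le> \<zeta> z)) \<and>
      asm_holds as (\<lambda>c. \<zeta> (the_inv_into {0..1} lam c))}"

text \<open>A (randomized) policy: a random seed w drawn from a probability space M, a query rule
  Q w H giving the next point and fidelity from the history H of (point, fidelity, observation)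
  triples, and an output rule out w H.\<close>
type_synonym 'x hist = "('x \<times> real \<times> real) list"

definition hist_cost :: "(real \<Rightarrow> real) \<Rightarrow> 'x hist \<Rightarrow> real" where
  "hist_cost lam H = sum_list (map (\<lambda>(x, z, y). lam z) H)"

fun run_hist :: "(real \<Rightarrow> real) \<Rightarrow> real \<Rightarrow> (real \<Rightarrow> 'x \<Rightarrow> real) \<Rightarrow> ('x hist \<Rightarrow> 'x \<times> real)
                 \<Rightarrow> nat \<Rightarrow> 'x hist" where
  "run_hist lam \<Lambda> fz Q 0 = []"
| "run_hist lam \<Lambda> fz Q (Suc n) =
     (let H = run_hist lam \<Lambda> fz Q n; (x, z) = Q H in
      if hist_cost lam H + lam z \<le> \<Lambda> then H @ [(x, z, fz z x)] else H)"

text \<open>Since every cost is >= 1, at most floor(Lambda) queries are performed, so the history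
  after floor(Lambda)+1 rounds is the final one.\<close>
definition final_hist :: "(real \<Rightarrow> real) \<Rightarrow> real \<Rightarrow> (real \<Rightarrow> 'x \<Rightarrow> real) \<Rightarrow> ('x hist \<Rightarrow> 'x \<times> real)
                 \<Rightarrow> 'x hist" where
  "final_hist lam \<Lambda> fz Q = run_hist lam \<Lambda> fz Q (nat \<lfloor>\<Lambda>\<rfloor> + 1)"

text \<open>Outer expectation of a nonnegative function (coincides with the usual expectation
  for measurable functions).\<close>
definition outer_nn_integral :: "'w measure \<Rightarrow> ('w \<Rightarrow> ennreal) \<Rightarrow> ennreal" where
  "outer_nn_integral M g =
     (INF h \<in> {h \<in> borel_measurable M. \<forall>w \<in> space M. g w \<le> h w}. integral\<^sup>N M h)"

definition simple_regret ::
  "'w measure \<Rightarrow> ('w \<Rightarrow> 'x hist \<Rightarrow> 'x \<times> real) \<Rightarrow> ('w \<Rightarrow> 'x hist \<Rightarrow> 'x)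
   \<Rightarrow> (real \<Rightarrow> real) \<Rightarrow> real \<Rightarrow> ('x \<Rightarrow> real) \<Rightarrow> (real \<Rightarrow> 'x \<Rightarrow> real) \<Rightarrow> ennreal" where
  "simple_regret M Q out lam \<Lambda> f fz =
     outer_nn_integral M (\<lambda>w. ennreal (Sup (range f) - f (out w (final_hist lam \<Lambda> fz (Q w)))))"

end

(* Both bounds come from averaging over a family of hard instances that agree with a common
   function g up to the bias allowed at cheap fidelities, so cheap queries reveal nothing.
   (a) g is a plateau of height -nu rho^j on U cells of depth j, and each target adds a
   peak in one of the K U plateau cells of depth j+1.  The budget pays for fewer than U
   expensive queries, so for at least half of the targets neither an expensive query nor
   the output lands in the peak cell, and their regret is at least nu rho^j.
   (b) Below a cell of depth m the targets are indexed by bit strings p of length L, the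
   peak of p sitting at the end of the path p.  An expensive query at x reveals only the
   bits of p along which x follows the path; for uniformly random p each new query reveals
   few bits on average, which a potential argument (optional stopping over the unrevealed
   bits) turns into a lower bound on the average depth at which the output leaves the path. *)
theory Submission
  imports Defs
begin

section \<open>Hierarchical partitions\<close>

locale partition_tree =
  fixes K :: nat and P :: "nat \<Rightarrow> nat \<Rightarrow> 'x set"
  assumes K_ge_2: "K \<ge> 2" and hier: "hier_partition K P"
begin

lemma K_pos: "K > 0"
  using K_ge_2 by simp

lemma root_cell: "P 0 0 = UNIV"
  using hier unfolding hier_partition_def by blast

lemma cell_nonempty: "i < K ^ h \<Longrightarrow> P h i \<noteq> {}"
  using hier unfolding hier_partition_def by blast

lemma cell_eq_children: "i < K ^ h \<Longrightarrow> P h i = (\<Union>l<K. P (Suc h) (K * i + l))"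
  using hier unfolding hier_partition_def by blast

lemma children_disjoint:
  "i < K ^ h \<Longrightarrow> l < K \<Longrightarrow> l' < K \<Longrightarrow> l \<noteq> l' \<Longrightarrow>
   P (Suc h) (K * i + l) \<inter> P (Suc h) (K * i + l') = {}"
  using hier unfolding hier_partition_def by blast

lemma parent_index_less: "i < K ^ Suc h \<Longrightarrow> i div K < K ^ h"
  using K_pos by (simp add: less_mult_imp_div_less mult.commute)

lemma cell_subset_parent:
  assumes "i < K ^ Suc h"
  shows "P (Suc h) i \<subseteq> P h (i div K)"
proof -
  have "i mod K < K" using K_pos by simp
  then have "P (Suc h) (K * (i div K) + i mod K) \<subseteq> P h (i div K)"
    using cell_eq_children[OF parent_index_less[OF assms]] by blast
  then show ?thesis by simp
qed

lemma cells_disjoint: "i < K ^ h \<Longrightarrow> i' < K ^ h \<Longrightarrow> i \<noteq> i' \<Longrightarrow> P h i \<inter> P h i' = {}"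
proof (induction h arbitrary: i i')
  case 0
  then show ?case by simp
next
  case (Suc h)
  show ?case
  proof (cases "i div K = i' div K")
    case True
    have "i mod K \<noteq> i' mod K" "i mod K < K" "i' mod K < K"
      using True Suc.prems(3) K_pos by (metis div_mod_decomp, simp_all)
    then have "P (Suc h) (K * (i div K) + i mod K) \<inter> P (Suc h) (K * (i' div K) + i' mod K) = {}"
      using children_disjoint[OF parent_index_less[OF Suc.prems(1)]] True by metis
    then show ?thesis by simp
  next
    case False
    then have "P h (i div K) \<inter> P h (i' div K) = {}"
      using Suc.IH parent_index_less Suc.prems by blast
    then show ?thesis using cell_subset_parent Suc.prems by blast
  qed
qed

lemma cells_cover: "\<exists>i < K ^ h. x \<in> P h i"
proof (induction h)
  case 0
  then show ?case using root_cell by simp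
next
  case (Suc h)
  then obtain i where i: "i < K ^ h" "x \<in> P h i" by blast
  then obtain l where l: "l < K" "x \<in> P (Suc h) (K * i + l)" using cell_eq_children by blast
  have "K * i + l < K * (i + 1)" using l by simp
  also have "\<dots> \<le> K * K ^ h" using i by (intro mult_le_mono2) simp
  also have "\<dots> = K ^ Suc h" by simp
  finally show ?case using l by blast
qed

definition cell_of :: "nat \<Rightarrow> 'x \<Rightarrow> nat" where
  "cell_of h x = (THE i. i < K ^ h \<and> x \<in> P h i)"

lemma cell_of_unique: "i < K ^ h \<Longrightarrow> x \<in> P h i \<Longrightarrow> cell_of h x = i"
  unfolding cell_of_def by (rule the_equality) (use cells_disjoint in blast)+

lemma cell_of_less: "cell_of h x < K ^ h"
  and in_cell_of: "x \<in> P h (cell_of h x)"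
  using cells_cover[of h x] cell_of_unique by metis+

lemma cell_of_Suc: "cell_of h x = cell_of (Suc h) x div K"
  using cell_subset_parent[OF cell_of_less] in_cell_of parent_index_less[OF cell_of_less]
  by (blast intro: cell_of_unique)

lemma cell_of_add: "cell_of h x = cell_of (h + k) x div K ^ k"
proof (induction k)
  case 0
  then show ?case by simp
next
  case (Suc k)
  then show ?case using cell_of_Suc[of "h + k" x] by (simp add: div_mult2_eq mult.commute)
qed

lemma cell_of_0: "cell_of 0 x = 0"
  using cell_of_less[of 0 x] by simp

lemma cell_of_le: "g \<le> h \<Longrightarrow> cell_of g x = cell_of h x div K ^ (h - g)"
  using cell_of_add[of g x "h - g"] by simp

lemma cell_of_eq_mono: "g \<le> h \<Longrightarrow> cell_of h x = cell_of h y \<Longrightarrow> cell_of g x = cell_of g y"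
  using cell_of_le by metis

definition point :: "nat \<Rightarrow> nat \<Rightarrow> 'x" where
  "point h i = (SOME x. x \<in> P h i)"

lemma cell_of_point: "i < K ^ h \<Longrightarrow> cell_of h (point h i) = i"
  using cell_nonempty by (metis cell_of_unique point_def some_in_eq)

end

section \<open>Level values and the hard functions\<close>

definition down_closed :: "nat set \<Rightarrow> bool" where
  "down_closed R \<longleftrightarrow> (\<forall>g h. h \<le> g \<longrightarrow> g \<in> R \<longrightarrow> h \<in> R)"

text \<open>All hard functions have the form \<open>x \<mapsto> level_value \<nu> \<rho> (R x)\<close>, where the down-closed set
  \<open>R x\<close> collects the depths at which \<open>x\<close> is still close to the optimum: leaving it at depth
  \<open>e + 1\<close> costs \<open>\<nu> \<rho>\<^sup>e\<close>.\<close>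
definition level_value :: "real \<Rightarrow> real \<Rightarrow> nat set \<Rightarrow> real" where
  "level_value \<nu> \<rho> R = (if R = UNIV then 0 else - \<nu> * \<rho> ^ (LEAST e. Suc e \<notin> R))"

lemma level_value_UNIV: "level_value \<nu> \<rho> UNIV = 0"
  unfolding level_value_def by simp

lemma level_value_nonpos: "0 \<le> \<nu> \<Longrightarrow> 0 \<le> \<rho> \<Longrightarrow> level_value \<nu> \<rho> R \<le> 0"
  unfolding level_value_def by simp

lemma level_value_ge:
  assumes R: "down_closed R" "g \<in> R" and \<nu>: "0 \<le> \<nu>" and \<rho>: "0 \<le> \<rho>" "\<rho> \<le> 1"
  shows "- \<nu> * \<rho> ^ g \<le> level_value \<nu> \<rho> R"
proof (cases "R = UNIV")
  case False
  then obtain g' where "g' \<notin> R" by blast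
  then have "Suc g' \<notin> R" using R(1) unfolding down_closed_def by (meson le_SucI order_refl)
  then have "Suc (LEAST e. Suc e \<notin> R) \<notin> R" by (rule LeastI)
  then have "g \<le> (LEAST e. Suc e \<notin> R)"
    using R unfolding down_closed_def by (meson not_less_eq_eq)
  then have "\<rho> ^ (LEAST e. Suc e \<notin> R) \<le> \<rho> ^ g" using \<rho> by (simp add: power_decreasing)
  then show ?thesis using False \<nu> unfolding level_value_def by (simp add: mult_left_mono)
qed (use \<nu> \<rho> in \<open>simp add: level_value_UNIV\<close>)

lemma level_value_le:
  assumes "Suc g \<notin> R" and \<nu>: "0 \<le> \<nu>" and \<rho>: "0 \<le> \<rho>" "\<rho> \<le> 1"
  shows "level_value \<nu> \<rho> R \<le> - \<nu> * \<rho> ^ g"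
proof -
  have "(LEAST e. Suc e \<notin> R) \<le> g" using assms(1) by (rule Least_le)
  then have "\<rho> ^ g \<le> \<rho> ^ (LEAST e. Suc e \<notin> R)" using \<rho> by (simp add: power_decreasing)
  then show ?thesis using assms unfolding level_value_def by (auto simp: mult_left_mono)
qed

context partition_tree
begin

text \<open>\<open>cell_of g x * K ^ (j - g)\<close> is the first depth-\<open>j\<close> descendant of the depth-\<open>g\<close> cell of
  \<open>x\<close>, so \<open>g \<in> plateau_levels j U x\<close> iff that cell meets one of the first \<open>U\<close> depth-\<open>j\<close>
  cells.\<close>
definition plateau_levels :: "nat \<Rightarrow> nat \<Rightarrow> 'x \<Rightarrow> nat set" where
  "plateau_levels j U x = {g. g \<le> j \<and> cell_of g x * K ^ (j - g) < U}"

definition peak_levels :: "nat \<Rightarrow> nat \<Rightarrow> 'x \<Rightarrow> 'x \<Rightarrow> nat set" where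
  "peak_levels j U xs x = {g. cell_of g x = cell_of g xs} \<union> plateau_levels j U x"

lemma down_closed_plateau_levels: "down_closed (plateau_levels j U x)"
  unfolding down_closed_def
proof (intro allI impI)
  fix g h assume hg: "h \<le> g" and g: "g \<in> plateau_levels j U x"
  then have gj: "g \<le> j" and lt: "cell_of g x * K ^ (j - g) < U"
    unfolding plateau_levels_def by auto
  have "cell_of h x * K ^ (g - h) \<le> cell_of g x"
    using cell_of_le[OF hg] by simp
  then have "cell_of h x * K ^ (g - h) * K ^ (j - g) \<le> cell_of g x * K ^ (j - g)"
    by simp
  moreover have "K ^ (g - h) * K ^ (j - g) = K ^ (j - h)"
    using hg gj by (simp flip: power_add)
  ultimately have "cell_of h x * K ^ (j - h) \<le> cell_of g x * K ^ (j - g)"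
    by (simp add: mult.assoc)
  then show "h \<in> plateau_levels j U x"
    using lt hg gj unfolding plateau_levels_def by simp
qed

lemma down_closed_peak_levels: "down_closed (peak_levels j U xs x)"
  using down_closed_plateau_levels[of j U x] cell_of_eq_mono
  unfolding down_closed_def peak_levels_def by blast

lemma peak_levels_self: "peak_levels j U xs xs = UNIV"
  unfolding peak_levels_def by auto

lemma peak_levels_eq_plateau_levels:
  assumes "cell_of (Suc j) x \<noteq> cell_of (Suc j) xs" and "cell_of j xs < U"
  shows "peak_levels j U xs x = plateau_levels j U x"
proof -
  have "g \<in> plateau_levels j U x" if g: "cell_of g x = cell_of g xs" for g
  proof (cases "g \<le> j")
    case True
    have "cell_of g xs * K ^ (j - g) \<le> cell_of j xs" using cell_of_le[OF True, of xs] by simp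
    then show ?thesis using True g assms(2) unfolding plateau_levels_def by simp
  next
    case False
    then show ?thesis using cell_of_eq_mono[of "Suc j" g x xs] g assms(1) by simp
  qed
  then show ?thesis unfolding peak_levels_def by auto
qed

end

lemma card_le_if_subset_div_eq:
  fixes A :: "nat set"
  assumes "0 < b" and A: "A \<subseteq> {i. i div b = a}"
  shows "card A \<le> b"
proof -
  have "A \<subseteq> {a * b..<a * b + b}"
  proof
    fix i assume "i \<in> A"
    then show "i \<in> {a * b..<a * b + b}"
      using A dividend_less_times_div[OF assms(1), of i] div_times_less_eq_dividend[of i b]
      by (auto simp: mult.commute)
  qed
  then show ?thesis using card_mono[of "{a * b..<a * b + b}" A] by simp
qed

lemma card_le_if_subset_div_less:
  fixes A :: "nat set"
  assumes "0 < b" and A: "A \<subseteq> {i. i div b < F}"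
  shows "card A \<le> F * b"
proof -
  have "A \<subseteq> {..<F * b}" using A assms(1) by (auto simp: div_less_iff_less_mult)
  then show ?thesis using card_mono[of "{..<F * b}" A] by simp
qed

locale regret_lower_bound = partition_tree K P for K and P :: "nat \<Rightarrow> nat \<Rightarrow> 'x set" +
  fixes \<nu> \<rho> d C :: real
  assumes nu_pos: "\<nu> > 0" and rho_pos: "0 < \<rho>" and rho_less_1: "\<rho> < 1"
    and d_nonneg: "0 \<le> d" and d_le: "d \<le> ln (real K) / ln (1 / \<rho>)"
    and C_ge: "C \<ge> (real K * \<rho> powr d) ^ nat \<lfloor>ln 3 / ln (1 / \<rho>)\<rfloor>" and C_gt_1: "C > 1"
begin

definition plateau_fun :: "nat \<Rightarrow> nat \<Rightarrow> 'x \<Rightarrow> real" where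
  "plateau_fun j U x = level_value \<nu> \<rho> (plateau_levels j U x)"

definition peak_fun :: "nat \<Rightarrow> nat \<Rightarrow> 'x \<Rightarrow> 'x \<Rightarrow> real" where
  "peak_fun j U xs x = level_value \<nu> \<rho> (peak_levels j U xs x)"

lemma level_value_nonpos': "level_value \<nu> \<rho> R \<le> 0"
  using level_value_nonpos nu_pos rho_pos by simp

lemma level_value_ge':
  "down_closed R \<Longrightarrow> g \<in> R \<Longrightarrow> - \<nu> * \<rho> ^ g \<le> level_value \<nu> \<rho> R"
  using level_value_ge nu_pos rho_pos rho_less_1 by simp

lemma level_value_le': "Suc g \<notin> R \<Longrightarrow> level_value \<nu> \<rho> R \<le> - \<nu> * \<rho> ^ g"
  using level_value_le nu_pos rho_pos rho_less_1 by simp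

lemma peak_fun_le_0: "peak_fun j U xs x \<le> 0"
  unfolding peak_fun_def by (rule level_value_nonpos')

lemma peak_fun_max: "peak_fun j U xs xs = 0"
  unfolding peak_fun_def peak_levels_self level_value_UNIV ..

lemma Sup_range_peak_fun: "Sup (range (peak_fun j U xs)) = 0"
  using peak_fun_le_0 peak_fun_max[of j U xs] by (intro cSup_eq_maximum) (auto intro: range_eqI)

lemma plateau_fun_le: "plateau_fun j U x \<le> - \<nu> * \<rho> ^ j"
  unfolding plateau_fun_def by (rule level_value_le') (simp add: plateau_levels_def)

lemma peak_fun_eq_plateau_fun:
  "cell_of (Suc j) x \<noteq> cell_of (Suc j) xs \<Longrightarrow> cell_of j xs < U \<Longrightarrow> peak_fun j U xs x = plateau_fun j U x"
  unfolding peak_fun_def plateau_fun_def by (simp add: peak_levels_eq_plateau_levels)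

lemma abs_peak_fun_minus_plateau_fun_le:
  assumes xs: "cell_of j xs < U"
  shows "\<bar>peak_fun j U xs x - plateau_fun j U x\<bar> \<le> \<nu> * \<rho> ^ j"
proof (cases "cell_of (Suc j) x = cell_of (Suc j) xs")
  case False
  then show ?thesis using peak_fun_eq_plateau_fun[OF _ xs] nu_pos rho_pos by simp
next
  case True
  then have "cell_of j x = cell_of j xs" by (intro cell_of_eq_mono[of j "Suc j"]) auto
  then have j: "j \<in> plateau_levels j U x" using xs unfolding plateau_levels_def by simp
  have "- \<nu> * \<rho> ^ j \<le> plateau_fun j U x"
    unfolding plateau_fun_def by (rule level_value_ge'[OF down_closed_plateau_levels j])
  moreover have "- \<nu> * \<rho> ^ j \<le> peak_fun j U xs x"
    unfolding peak_fun_def by (rule level_value_ge'[OF down_closed_peak_levels]) (use j in \<open>simp add: peak_levels_def\<close>)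
  ultimately show ?thesis
    using peak_fun_le_0[of j U xs x] level_value_nonpos'[of "plateau_levels j U x"]
    unfolding plateau_fun_def by linarith
qed

definition gap_depth :: nat where
  "gap_depth = nat \<lfloor>ln 3 / ln (1 / \<rho>)\<rfloor>"

lemma ln_inv_rho_pos: "ln (1 / \<rho>) > 0"
  using rho_pos rho_less_1 by simp

lemma rho_powr_le_1: "0 \<le> e \<Longrightarrow> \<rho> powr e \<le> 1"
  using rho_pos rho_less_1 by (cases "e = 0") (auto simp: less_eq_real_def powr01_less_one)

lemma rho_powr_neg_ge_1: "\<rho> powr (- d * real g) \<ge> 1"
  using rho_powr_le_1[of "d * real g"] d_nonneg rho_pos by (simp add: powr_minus_divide)

lemma rho_powr_neg_d_le_K: "\<rho> powr (- d) \<le> real K"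
proof -
  have "d * ln (1 / \<rho>) \<le> ln (real K)" using d_le ln_inv_rho_pos by (simp add: pos_le_divide_eq)
  then have "exp (d * ln (1 / \<rho>)) \<le> real K" using K_pos by (metis exp_le_cancel_iff exp_ln of_nat_0_less_iff)
  then show ?thesis using rho_pos by (simp add: powr_def ln_div)
qed

lemma K_rho_powr_d_ge_1: "1 \<le> real K * \<rho> powr d"
  using rho_powr_neg_d_le_K rho_pos by (simp add: powr_minus_divide divide_le_eq mult.commute)

lemma three_rho_power_gap: "3 * \<rho> ^ Suc gap_depth < 1"
proof -
  have "ln 3 / ln (1 / \<rho>) < real (Suc gap_depth)"
    unfolding gap_depth_def using ln_inv_rho_pos by (simp add: add.commute) linarith
  then have "ln 3 < real (Suc gap_depth) * ln (1 / \<rho>)" using ln_inv_rho_pos by (simp add: divide_less_eq)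
  also have "\<dots> = - ln (\<rho> ^ Suc gap_depth)"
    using rho_pos by (simp only: ln_realpow ln_div) simp
  finally have "ln (3 * \<rho> ^ Suc gap_depth) < 0" using rho_pos by (simp add: ln_mult)
  then show ?thesis using rho_pos by (simp add: ln_less_zero_iff)
qed

lemma K_rho_powr_power: "(real K * \<rho> powr d) ^ h * \<rho> powr (- d * real h) = real (K ^ h)"
  using rho_pos by (simp add: power_mult_distrib powr_power powr_add[symmetric] mult.commute)

lemma K_power_le: assumes "h \<le> gap_depth" shows "real (K ^ h) \<le> C * \<rho> powr (- d * real h)"
proof -
  have "(real K * \<rho> powr d) ^ h \<le> (real K * \<rho> powr d) ^ gap_depth"
    using K_rho_powr_d_ge_1 assms by (simp add: power_increasing)
  also have "\<dots> \<le> C" using C_ge unfolding gap_depth_def .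
  finally show ?thesis using K_rho_powr_power[of h] by (metis mult_right_mono powr_ge_zero)
qed

lemma K_power_gap_depth_le:
  "real (K ^ gap_depth) * \<rho> powr (- d * real G) \<le> C * \<rho> powr (- d * real (G + gap_depth))"
proof -
  have "real (K ^ gap_depth) * \<rho> powr (- d * real G)
      \<le> C * \<rho> powr (- d * real gap_depth) * \<rho> powr (- d * real G)"
    by (rule mult_right_mono[OF K_power_le]) simp_all
  moreover have "\<rho> powr (- d * real (G + gap_depth)) = \<rho> powr (- d * real gap_depth) * \<rho> powr (- d * real G)"
    by (simp add: powr_add[symmetric] algebra_simps)
  ultimately show ?thesis by (simp add: mult.assoc)
qed

lemma near_optimal_cell_reaches_level:
  assumes i: "i < K ^ (G + gap_depth)" and G: "1 \<le> G"
    and sup: "- 3 * \<nu> * \<rho> ^ (G + gap_depth) \<le> Sup ((\<lambda>x. level_value \<nu> \<rho> (R x)) ` P (G + gap_depth) i)"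
  shows "\<exists>x \<in> P (G + gap_depth) i. G \<in> R x"
proof (rule ccontr)
  assume "\<not> ?thesis"
  then have "\<forall>x \<in> P (G + gap_depth) i. level_value \<nu> \<rho> (R x) \<le> - \<nu> * \<rho> ^ (G - 1)"
    using G level_value_le'[of "G - 1"] by simp
  then have "Sup ((\<lambda>x. level_value \<nu> \<rho> (R x)) ` P (G + gap_depth) i) \<le> - \<nu> * \<rho> ^ (G - 1)"
    using cell_nonempty[OF i] by (intro cSup_least) auto
  moreover have "G + gap_depth = (G - 1) + Suc gap_depth" using G by simp
  then have "\<rho> ^ (G + gap_depth) = \<rho> ^ (G - 1) * \<rho> ^ Suc gap_depth" by (metis power_add)
  then have "3 * \<rho> ^ (G + gap_depth) < \<rho> ^ (G - 1)"
    using three_rho_power_gap rho_pos by (simp add: mult_less_cancel_left1)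
  then have "\<nu> * (3 * \<rho> ^ (G + gap_depth)) < \<nu> * \<rho> ^ (G - 1)"
    using nu_pos by (rule mult_strict_left_mono)
  ultimately show False using sup by linarith
qed

lemma near_optimal_cell_of_peak_fun:
  assumes i: "i < K ^ (G + gap_depth)" and G: "1 \<le> G"
    and sup: "- 3 * \<nu> * \<rho> ^ (G + gap_depth) \<le> Sup (peak_fun j U xs ` P (G + gap_depth) i)"
  shows "i div K ^ gap_depth = cell_of G xs \<or> (G \<le> j \<and> i div K ^ gap_depth * K ^ (j - G) < U)"
proof -
  obtain x where x: "x \<in> P (G + gap_depth) i" "G \<in> peak_levels j U xs x"
    using near_optimal_cell_reaches_level[OF i G, of "peak_levels j U xs"] sup
    unfolding peak_fun_def by blast
  have "cell_of G x = i div K ^ gap_depth"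
    using cell_of_add[of G x gap_depth] cell_of_unique[OF i x(1)] by simp
  then show ?thesis using x(2) unfolding peak_levels_def plateau_levels_def by auto
qed

text \<open>The hypothesis on \<open>U\<close> says that at every depth \<open>g \<le> j\<close> the plateau meets at most
  \<open>\<rho>\<^sup>-\<^sup>d\<^sup>g\<close> cells.\<close>
lemma card_near_optimal_cells_deep:
  assumes U: "\<And>g. g \<le> j \<Longrightarrow> U \<le> K ^ (j - g) * nat \<lfloor>\<rho> powr (- d * real g)\<rfloor>"
    and xs: "cell_of j xs < U" and G: "1 \<le> G"
  defines "h \<equiv> G + gap_depth"
  shows "real (card {i. i < K ^ h \<and> - 3 * \<nu> * \<rho> ^ h \<le> Sup (peak_fun j U xs ` P h i)})
          \<le> real (K ^ gap_depth) * \<rho> powr (- d * real G)"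
proof -
  define S where "S = {i. i < K ^ h \<and> - 3 * \<nu> * \<rho> ^ h \<le> Sup (peak_fun j U xs ` P h i)}"
  have KG: "0 < K ^ gap_depth" using K_pos by simp
  have "real (card S) \<le> real (K ^ gap_depth) * \<rho> powr (- d * real G)"
  proof (cases "G \<le> j")
    case True
    define F where "F = nat \<lfloor>\<rho> powr (- d * real G)\<rfloor>"
    have "S \<subseteq> {i. i div K ^ gap_depth < F}"
    proof
      fix i assume "i \<in> S"
      then have "i div K ^ gap_depth = cell_of G xs \<or> i div K ^ gap_depth * K ^ (j - G) < U"
        using near_optimal_cell_of_peak_fun[OF _ G] unfolding S_def h_def by blast
      moreover have "cell_of G xs * K ^ (j - G) \<le> cell_of j xs"
        using cell_of_le[OF True, of xs] by simp
      moreover note xs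
      ultimately have "i div K ^ gap_depth * K ^ (j - G) < U" by auto
      also have "U \<le> F * K ^ (j - G)" using U[OF True] unfolding F_def by (simp add: mult.commute)
      finally show "i \<in> {i. i div K ^ gap_depth < F}" by simp
    qed
    then have "card S \<le> F * K ^ gap_depth" by (rule card_le_if_subset_div_less[OF KG])
    then have "real (card S) \<le> real F * real (K ^ gap_depth)" by (metis of_nat_le_iff of_nat_mult)
    also have "\<dots> \<le> \<rho> powr (- d * real G) * real (K ^ gap_depth)"
      by (rule mult_right_mono) (simp_all add: F_def of_nat_floor)
    finally show ?thesis by (simp add: mult.commute)
  next
    case False
    have "S \<subseteq> {i. i div K ^ gap_depth = cell_of G xs}"
      using near_optimal_cell_of_peak_fun[OF _ G] False unfolding S_def h_def by blast
    then have "card S \<le> K ^ gap_depth" by (rule card_le_if_subset_div_eq[OF KG])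
    then have "real (card S) \<le> real (K ^ gap_depth) * 1" by simp
    also have "\<dots> \<le> real (K ^ gap_depth) * \<rho> powr (- d * real G)"
      using rho_powr_neg_ge_1 by (intro mult_left_mono) simp_all
    finally show ?thesis .
  qed
  then show ?thesis unfolding S_def .
qed

lemma card_near_optimal_cells_peak_fun:
  assumes U: "\<And>g. g \<le> j \<Longrightarrow> U \<le> K ^ (j - g) * nat \<lfloor>\<rho> powr (- d * real g)\<rfloor>"
    and xs: "cell_of j xs < U"
  shows "real (card {i. i < K ^ h \<and> - 3 * \<nu> * \<rho> ^ h \<le> Sup (peak_fun j U xs ` P h i)})
          \<le> C * \<rho> powr (- d * real h)"
proof (cases "h \<le> gap_depth")
  case True
  have "{i. i < K ^ h \<and> - 3 * \<nu> * \<rho> ^ h \<le> Sup (peak_fun j U xs ` P h i)} \<subseteq> {..<K ^ h}" by auto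
  then have "card {i. i < K ^ h \<and> - 3 * \<nu> * \<rho> ^ h \<le> Sup (peak_fun j U xs ` P h i)} \<le> K ^ h"
    using card_mono[of "{..<K ^ h}"] by simp
  then show ?thesis using K_power_le[OF True] by (meson of_nat_le_iff order_trans)
next
  case False
  define G where "G = h - gap_depth"
  have h: "h = G + gap_depth" and G: "1 \<le> G" using False unfolding G_def by simp_all
  show ?thesis
    using card_near_optimal_cells_deep[OF U xs G] K_power_gap_depth_le[of G] unfolding h
    by linarith
qed

lemma peak_fun_in_fun_class:
  assumes U: "\<And>g. g \<le> j \<Longrightarrow> U \<le> K ^ (j - g) * nat \<lfloor>\<rho> powr (- d * real g)\<rfloor>"
    and xs: "cell_of j xs < U"
  shows "peak_fun j U xs \<in> fun_class K P \<nu> \<rho> d C"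
proof -
  have "- \<nu> * \<rho> ^ h \<le> peak_fun j U xs x" if "i < K ^ h" "xs \<in> P h i" "x \<in> P h i" for h i x
  proof -
    have "h \<in> peak_levels j U xs x" using that cell_of_unique unfolding peak_levels_def by auto
    then show ?thesis unfolding peak_fun_def by (rule level_value_ge'[OF down_closed_peak_levels])
  qed
  then show ?thesis
    using peak_fun_le_0 card_near_optimal_cells_peak_fun[OF U xs]
    unfolding fun_class_def mem_Collect_eq by (intro exI[of _ xs]) (simp add: peak_fun_max, blast)
qed

end

section \<open>Masked fidelities and runs of a policy\<close>

lemma Phibar_nonneg: "asm_params_ok as \<Longrightarrow> c \<ge> 1 \<Longrightarrow> Phibar as c \<ge> 0"
  unfolding asm_params_ok_def Phibar_def by (cases as) auto

lemma inv_Phibar_ge_1: "inv_Phibar as t \<ge> 1"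
  unfolding inv_Phibar_def by (rule Inf_greatest) auto

lemma Phibar_gt_if_less_inv_Phibar:
  assumes "asm_params_ok as" "c \<ge> 1" "ereal c < inv_Phibar as t"
  shows "Phibar as c > ereal t"
proof (rule ccontr)
  assume "\<not> ?thesis"
  then have "ereal c \<in> {ereal c | c. c \<ge> 1 \<and> Phibar as c \<in> {0 .. ereal t}}"
    using Phibar_nonneg[OF assms(1,2)] assms(2) by auto
  then have "inv_Phibar as t \<le> ereal c" unfolding inv_Phibar_def by (rule Inf_lower)
  then show False using assms(3) by simp
qed

lemma asm_holds_Phibar: "asm_holds as (Phibar as)"
  unfolding asm_holds_def Phibar_def by (cases as) auto

definition masked_fidelities ::
  "asm \<Rightarrow> (real \<Rightarrow> real) \<Rightarrow> real \<Rightarrow> ('x \<Rightarrow> real) \<Rightarrow> ('x \<Rightarrow> real) \<Rightarrow> real \<Rightarrow> 'x \<Rightarrow> real" where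
  "masked_fidelities as lam t g f = (\<lambda>z x. if ereal (lam z) < inv_Phibar as t then g x else f x)"

lemma masked_fidelities_in_fid_class:
  assumes as: "asm_params_ok as" and lam: "bij_betw lam {0..1} {1..}"
    and close: "\<And>x. \<bar>f x - g x\<bar> \<le> t"
  shows "masked_fidelities as lam t g f \<in> fid_class as f lam"
proof -
  define \<zeta> where "\<zeta> = (\<lambda>z. Phibar as (lam z))"
  have lam_ge_1: "lam z \<ge> 1" if "z \<in> {0..1}" for z using lam that unfolding bij_betw_def by auto
  have bias: "ereal \<bar>f x - masked_fidelities as lam t g f z x\<bar> \<le> \<zeta> z" if z: "z \<in> {0..1}" for z x
  proof (cases "ereal (lam z) < inv_Phibar as t")
    case True
    then have "ereal t < \<zeta> z"
      unfolding \<zeta>_def using Phibar_gt_if_less_inv_Phibar[OF as lam_ge_1[OF z]] by blast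
    moreover have "ereal \<bar>f x - g x\<bar> \<le> ereal t" using close by simp
    ultimately have "ereal \<bar>f x - g x\<bar> \<le> \<zeta> z" by (meson less_imp_le order_trans)
    then show ?thesis using True unfolding masked_fidelities_def by simp
  next
    case False
    then show ?thesis using Phibar_nonneg[OF as lam_ge_1[OF z]]
      unfolding masked_fidelities_def \<zeta>_def by (simp add: zero_ereal_def[symmetric])
  qed
  have "\<zeta> (the_inv_into {0..1} lam c) = Phibar as c" if "c \<ge> 1" for c
    unfolding \<zeta>_def using f_the_inv_into_f_bij_betw[OF lam] that by simp
  then have "asm_holds as (\<lambda>c. \<zeta> (the_inv_into {0..1} lam c))"
    using asm_holds_Phibar[of as] unfolding asm_holds_def by (cases as) auto
  moreover have "strict_mono (id :: real \<Rightarrow> real)" by (simp add: strict_mono_def)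
  ultimately show ?thesis
    using bias Phibar_nonneg[OF as] lam_ge_1 unfolding fid_class_def mem_Collect_eq \<zeta>_def
    by (intro exI[of _ \<zeta>] exI[of _ "\<lambda>z. id"]) (simp add: \<zeta>_def)
qed

lemma exact_fidelities_in_fid_class:
  "asm_params_ok as \<Longrightarrow> bij_betw lam {0..1} {1..} \<Longrightarrow> (\<lambda>z. f) \<in> fid_class as f lam"
  using masked_fidelities_in_fid_class[of as lam f f 0] by (simp add: masked_fidelities_def)

lemma hist_cost_snoc: "hist_cost lam (H @ [(x, z, y)]) = hist_cost lam H + lam z"
  unfolding hist_cost_def by simp

lemma run_hist_Suc_cases:
  obtains "run_hist lam \<Lambda> fz Q (Suc n) = run_hist lam \<Lambda> fz Q n"
  | x z where "Q (run_hist lam \<Lambda> fz Q n) = (x, z)"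
      "hist_cost lam (run_hist lam \<Lambda> fz Q n) + lam z \<le> \<Lambda>"
      "run_hist lam \<Lambda> fz Q (Suc n) = run_hist lam \<Lambda> fz Q n @ [(x, z, fz z x)]"
proof -
  obtain x z where xz: "Q (run_hist lam \<Lambda> fz Q n) = (x, z)" by fastforce
  show thesis
  proof (cases "hist_cost lam (run_hist lam \<Lambda> fz Q n) + lam z \<le> \<Lambda>")
    case True
    then show thesis using that(2)[OF xz] xz by simp
  next
    case False
    then show thesis using that(1) xz by simp
  qed
qed

lemma run_hist_cost_le: "run_hist lam \<Lambda> fz Q n = [] \<or> hist_cost lam (run_hist lam \<Lambda> fz Q n) \<le> \<Lambda>"
proof (induction n)
  case (Suc n)
  then show ?case by (cases rule: run_hist_Suc_cases[of lam \<Lambda> fz Q n]) (auto simp: hist_cost_snoc)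
qed simp

lemma run_hist_mono: "m \<le> n \<Longrightarrow> set (run_hist lam \<Lambda> fz Q m) \<subseteq> set (run_hist lam \<Lambda> fz Q n)"
proof (induction n rule: dec_induct)
  case (step n)
  then show ?case by (cases rule: run_hist_Suc_cases[of lam \<Lambda> fz Q n]) auto
qed simp

lemma run_hist_queried: "(x, z, y) \<in> set (run_hist lam \<Lambda> fz Q n) \<Longrightarrow> \<exists>H. Q H = (x, z)"
proof (induction n)
  case (Suc n)
  then show ?case by (cases rule: run_hist_Suc_cases[of lam \<Lambda> fz Q n]) auto
qed simp

lemma run_hist_cong:
  assumes "\<And>x z y. (x, z, y) \<in> set (run_hist lam \<Lambda> fz Q n) \<Longrightarrow> fz' z x = fz z x"
  shows "run_hist lam \<Lambda> fz' Q n = run_hist lam \<Lambda> fz Q n"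
  using assms
proof (induction n)
  case (Suc n)
  then have IH: "run_hist lam \<Lambda> fz' Q n = run_hist lam \<Lambda> fz Q n"
    using run_hist_mono[of n "Suc n" lam \<Lambda> fz Q] by auto
  show ?case
  proof (cases rule: run_hist_Suc_cases[of lam \<Lambda> fz Q n])
    case 1
    then show ?thesis using IH by (auto simp: Let_def split: prod.splits)
  next
    case (2 x z)
    then show ?thesis using IH Suc.prems[of x z "fz z x"] by simp
  qed
qed simp

lemma length_filter_cost_ge_mult_le:
  assumes "\<forall>e \<in> set H. lam (fst (snd e)) \<ge> 0" and "c \<ge> 0"
  shows "real (length (filter (\<lambda>e. c \<le> lam (fst (snd e))) H)) * c \<le> hist_cost lam H"
  using assms(1)
proof (induction H)
  case (Cons e H)
  have "hist_cost lam (e # H) = lam (fst (snd e)) + hist_cost lam H"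
    unfolding hist_cost_def by (cases e) auto
  then show ?case using Cons assms(2) by (auto simp: algebra_simps)
qed (simp add: hist_cost_def)

lemma length_filter_expensive_le:
  assumes lam: "bij_betw lam {0..1} {1..}" and Q: "\<And>H. snd (Q H) \<in> {0..1}"
    and budget: "ereal \<Lambda> \<le> ereal F * inv_Phibar as t"
  shows "real (length (filter (\<lambda>e. inv_Phibar as t \<le> ereal (lam (fst (snd e)))) (run_hist lam \<Lambda> fz Q n)))
           \<le> max 0 F"
proof (cases "inv_Phibar as t")
  case (real c)
  define H where "H = run_hist lam \<Lambda> fz Q n"
  have c: "c \<ge> 1" using inv_Phibar_ge_1[of as t] real by simp
  have cost: "lam z \<ge> 1" if e: "(x, z, y) \<in> set H" for x z y
  proof -
    obtain H' where "Q H' = (x, z)" using run_hist_queried[OF e[unfolded H_def]] by blast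
    then have "z \<in> {0..1}" using Q[of H'] by simp
    then show ?thesis using lam unfolding bij_betw_def by auto
  qed
  show ?thesis
  proof (cases "H = []")
    case False
    then have "real (length (filter (\<lambda>e. c \<le> lam (fst (snd e))) H)) * c \<le> \<Lambda>"
      using length_filter_cost_ge_mult_le[of H lam c] run_hist_cost_le[of lam \<Lambda> fz Q n] cost c
      unfolding H_def by fastforce
    also have "\<Lambda> \<le> F * c" using budget real by simp
    finally show ?thesis using c real unfolding H_def by simp
  qed (simp add: H_def)
qed (use inv_Phibar_ge_1[of as t] in auto)

lemma exists_outer_nn_integral_ge:
  fixes G :: "'i \<Rightarrow> 'w \<Rightarrow> ennreal"
  assumes M: "prob_space M" and I: "finite I" "I \<noteq> {}"
    and sum: "\<And>w. w \<in> space M \<Longrightarrow> of_nat (card I) * r \<le> (\<Sum>i\<in>I. G i w)"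
  shows "\<exists>i\<in>I. r \<le> outer_nn_integral M (G i)"
proof (rule ccontr)
  assume "\<not> ?thesis"
  then have "\<forall>i\<in>I. (INF h \<in> {h \<in> borel_measurable M. \<forall>w \<in> space M. G i w \<le> h w}. integral\<^sup>N M h) < r"
    unfolding outer_nn_integral_def by (simp add: not_le)
  then have "\<forall>i\<in>I. \<exists>h. h \<in> borel_measurable M \<and> (\<forall>w \<in> space M. G i w \<le> h w) \<and> integral\<^sup>N M h < r"
    by (simp add: INF_less_iff)
  then obtain h where h: "\<And>i. i \<in> I \<Longrightarrow> h i \<in> borel_measurable M"
    "\<And>i w. i \<in> I \<Longrightarrow> w \<in> space M \<Longrightarrow> G i w \<le> h i w"
    "\<And>i. i \<in> I \<Longrightarrow> integral\<^sup>N M (h i) < r"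
    by metis
  have "of_nat (card I) * r = (\<integral>\<^sup>+ w. of_nat (card I) * r \<partial>M)"
    using M by (simp add: nn_integral_const prob_space.emeasure_space_1)
  also have "\<dots> \<le> (\<integral>\<^sup>+ w. (\<Sum>i\<in>I. h i w) \<partial>M)"
  proof (rule nn_integral_mono)
    fix w assume w: "w \<in> space M"
    have "(\<Sum>i\<in>I. G i w) \<le> (\<Sum>i\<in>I. h i w)" using h(2) w by (intro sum_mono) auto
    then show "of_nat (card I) * r \<le> (\<Sum>i\<in>I. h i w)" using sum[OF w] by order
  qed
  also have "\<dots> = (\<Sum>i\<in>I. integral\<^sup>N M (h i))"
    using h(1) by (rule nn_integral_sum)
  also have "\<dots> \<le> of_nat (card I) * Max ((\<lambda>i. integral\<^sup>N M (h i)) ` I)"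
    using I(1) sum_mono[of I "\<lambda>i. integral\<^sup>N M (h i)" "\<lambda>_. Max ((\<lambda>i. integral\<^sup>N M (h i)) ` I)"]
    by simp
  also have "\<dots> < of_nat (card I) * r"
  proof (rule ennreal_mult_strict_left_mono)
    show "Max ((\<lambda>i. integral\<^sup>N M (h i)) ` I) < r" using I h(3) by (subst Max_less_iff) auto
  qed (use I of_nat_less_top in \<open>auto simp: card_gt_0_iff\<close>)
  finally show False by simp
qed

lemma exists_ge_SUP:
  fixes R :: "'a \<Rightarrow> 'b \<Rightarrow> ennreal" and S :: "real set"
  assumes nonempty: "\<exists>a\<in>A. \<exists>b\<in>B a. True"
    and witness: "S \<noteq> {} \<Longrightarrow> \<exists>v. (\<forall>r\<in>S. r \<le> v) \<and> (\<exists>a\<in>A. \<exists>b\<in>B a. ennreal v \<le> R a b)"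
  shows "\<exists>a\<in>A. \<exists>b\<in>B a. (SUP r\<in>S. ennreal r) \<le> R a b"
proof (cases "S = {}")
  case False
  then obtain v a b where v: "\<forall>r\<in>S. r \<le> v" and ab: "a \<in> A" "b \<in> B a" "ennreal v \<le> R a b"
    using witness by blast
  have "(SUP r\<in>S. ennreal r) \<le> ennreal v" using v by (intro SUP_least ennreal_leI) auto
  then show ?thesis using ab by (meson order_trans)
qed (use nonempty in simp)

lemma exists_masked_instance_regret_ge:
  fixes f :: "'i \<Rightarrow> 'x \<Rightarrow> real" and S :: "('x \<Rightarrow> real) set"
  assumes as: "asm_params_ok as" and lam: "bij_betw lam {0..1} {1..}" and M: "prob_space M"
    and I: "finite I" "I \<noteq> {}" and f: "\<And>i. i \<in> I \<Longrightarrow> f i \<in> S"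
    and close: "\<And>i x. i \<in> I \<Longrightarrow> \<bar>f i x - g x\<bar> \<le> t"
    and sum: "\<And>w. w \<in> space M \<Longrightarrow> of_nat (card I) * r \<le>
      (\<Sum>i\<in>I. ennreal (Sup (range (f i)) - f i (out w (final_hist lam \<Lambda> (masked_fidelities as lam t g (f i)) (Q w)))))"
  shows "\<exists>f\<in>S. \<exists>fz\<in>fid_class as f lam. r \<le> simple_regret M Q out lam \<Lambda> f fz"
proof -
  have "\<exists>i\<in>I. r \<le> simple_regret M Q out lam \<Lambda> (f i) (masked_fidelities as lam t g (f i))"
    unfolding simple_regret_def by (rule exists_outer_nn_integral_ge[OF M I]) (rule sum)
  then obtain i where i: "i \<in> I" and "r \<le> simple_regret M Q out lam \<Lambda> (f i) (masked_fidelities as lam t g (f i))"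
    by blast
  moreover have "masked_fidelities as lam t g (f i) \<in> fid_class as (f i) lam"
    using close[OF i] by (rule masked_fidelities_in_fid_class[OF as lam])
  ultimately show ?thesis using f[OF i] by blast
qed

lemma final_hist_masked_eq:
  assumes "\<And>x z y. (x, z, y) \<in> set (final_hist lam \<Lambda> (\<lambda>z. g) Q) \<Longrightarrow> inv_Phibar as t \<le> ereal (lam z) \<Longrightarrow> f x = g x"
  shows "final_hist lam \<Lambda> (masked_fidelities as lam t g f) Q = final_hist lam \<Lambda> (\<lambda>z. g) Q"
  unfolding final_hist_def
  by (rule run_hist_cong) (use assms in \<open>auto simp: masked_fidelities_def final_hist_def not_less\<close>)

section \<open>The plateau bound\<close>

lemma sum_ge_half_if_few_exceptions:
  fixes G :: "'i \<Rightarrow> ennreal"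
  assumes I: "finite I" and H: "H \<subseteq> I" "2 * card H \<le> card I" and a: "0 \<le> a"
    and G: "\<And>i. i \<in> I - H \<Longrightarrow> ennreal a \<le> G i"
  shows "of_nat (card I) * ennreal (a / 2) \<le> (\<Sum>i\<in>I. G i)"
proof -
  have "card (I - H) = card I - card H" using card_Diff_subset[OF finite_subset[OF H(1) I] H(1)] .
  then have "card I \<le> 2 * card (I - H)" using H(2) by linarith
  then have "real (card I) * (a / 2) \<le> (2 * real (card (I - H))) * (a / 2)"
    using a by (intro mult_right_mono) auto
  then have "real (card I) * (a / 2) \<le> real (card (I - H)) * a" by simp
  then have "of_nat (card I) * ennreal (a / 2) \<le> of_nat (card (I - H)) * ennreal a"
    using a by (simp add: ennreal_of_nat_eq_real_of_nat ennreal_mult'[symmetric] ennreal_leI)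
  also have "\<dots> = (\<Sum>i\<in>I - H. ennreal a)" by simp
  also have "\<dots> \<le> (\<Sum>i\<in>I - H. G i)" using G by (rule sum_mono)
  also have "\<dots> \<le> (\<Sum>i\<in>I. G i)" using I by (intro sum_mono2) auto
  finally show ?thesis .
qed

lemma real_nat_floor_gt_half:
  assumes "(1::real) \<le> y" shows "y / 2 < real (nat \<lfloor>y\<rfloor>)"
proof (cases "y < 2")
  case True
  then have "\<lfloor>y\<rfloor> = 1" using assms by (intro floor_unique) auto
  then show ?thesis using True by simp
next
  case False
  then show ?thesis using assms by linarith
qed

context regret_lower_bound
begin

lemma fun_class_fid_class_nonempty:
  assumes "asm_params_ok as" and "bij_betw lam {0..1} {1..}"
  shows "\<exists>f \<in> fun_class K P \<nu> \<rho> d C. \<exists>fz \<in> fid_class as f lam. True"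
proof -
  have "peak_fun 0 1 x \<in> fun_class K P \<nu> \<rho> d C"
    by (rule peak_fun_in_fun_class) (use rho_pos in \<open>simp_all add: cell_of_0\<close>)
  then show ?thesis using exact_fidelities_in_fid_class[OF assms] by blast
qed

lemma cell_of_point_Suc:
  assumes "U \<le> K ^ j" and "c < K * U"
  shows "cell_of (Suc j) (point (Suc j) c) = c" and "cell_of j (point (Suc j) c) < U"
proof -
  have "K * U \<le> K ^ Suc j" using assms(1) by simp
  then show c: "cell_of (Suc j) (point (Suc j) c) = c" using assms(2) by (intro cell_of_point) linarith
  have "c div K < U" using assms(2) by (intro less_mult_imp_div_less) (simp add: mult.commute)
  then show "cell_of j (point (Suc j) c) < U" using cell_of_Suc[of j "point (Suc j) c"] by (simp add: c)
qed

text \<open>Of the \<open>K U\<close> depth-\<open>(j+1)\<close> plateau cells, at most \<open>U\<close> are queried expensively or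
  output, and a peak in any other cell goes unnoticed.\<close>
lemma plateau_regret_sum_ge:
  fixes Q :: "'x hist \<Rightarrow> 'x \<times> real" and out :: "'x hist \<Rightarrow> 'x"
  assumes lam: "bij_betw lam {0..1} {1..}" and Q: "\<And>H. snd (Q H) \<in> {0..1}"
    and budget: "ereal \<Lambda> \<le> ereal F * inv_Phibar as t" and F: "max 0 F < real U"
    and U: "U \<le> K ^ j"
  shows "of_nat (card {..<K * U}) * ennreal (\<nu> * \<rho> ^ j / 2) \<le>
    (\<Sum>c<K * U. ennreal (Sup (range (peak_fun j U (point (Suc j) c))) - peak_fun j U (point (Suc j) c)
       (out (final_hist lam \<Lambda> (masked_fidelities as lam t (plateau_fun j U) (peak_fun j U (point (Suc j) c))) Q))))"
proof (rule sum_ge_half_if_few_exceptions)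
  define R where "R = final_hist lam \<Lambda> (\<lambda>z. plateau_fun j U) Q"
  define E where "E = filter (\<lambda>e. inv_Phibar as t \<le> ereal (lam (fst (snd e)))) R"
  define hit where "hit = (\<lambda>e. cell_of (Suc j) (fst e)) ` set E \<union> {cell_of (Suc j) (out R)}"
  have "real (length E) < real U"
    using length_filter_expensive_le[where Q=Q, OF lam Q budget] F unfolding E_def R_def final_hist_def
    by (meson le_less_trans)
  have "card hit \<le> card ((\<lambda>e. cell_of (Suc j) (fst e)) ` set E) + card {cell_of (Suc j) (out R)}"
    unfolding hit_def by (rule card_Un_le)
  also have "\<dots> \<le> length E + 1"
    using card_image_le[of "set E" "\<lambda>e. cell_of (Suc j) (fst e)"] card_length[of E] by simp
  finally have "card hit \<le> U" using \<open>real (length E) < real U\<close> by linarith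
  moreover have "card ({..<K * U} \<inter> hit) \<le> card hit" by (rule card_mono) (simp_all add: hit_def)
  ultimately show "2 * card ({..<K * U} \<inter> hit) \<le> card {..<K * U}"
    using mult_le_mono1[OF K_ge_2, of U] by (simp only: card_lessThan)
  show "ennreal (\<nu> * \<rho> ^ j) \<le> ennreal (Sup (range (peak_fun j U (point (Suc j) c))) - peak_fun j U (point (Suc j) c)
       (out (final_hist lam \<Lambda> (masked_fidelities as lam t (plateau_fun j U) (peak_fun j U (point (Suc j) c))) Q)))"
    if c: "c \<in> {..<K * U} - ({..<K * U} \<inter> hit)" for c
  proof -
    have off_peak: "peak_fun j U (point (Suc j) c) x = plateau_fun j U x" if "cell_of (Suc j) x \<noteq> c" for x
      using peak_fun_eq_plateau_fun cell_of_point_Suc[OF U] c that by simp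
    have "final_hist lam \<Lambda> (masked_fidelities as lam t (plateau_fun j U) (peak_fun j U (point (Suc j) c))) Q = R"
      unfolding R_def by (rule final_hist_masked_eq) (use c off_peak in \<open>force simp: hit_def E_def R_def\<close>)
    moreover have "cell_of (Suc j) (out R) \<noteq> c" using c unfolding hit_def by auto
    then have "peak_fun j U (point (Suc j) c) (out R) \<le> - \<nu> * \<rho> ^ j"
      using off_peak plateau_fun_le by simp
    ultimately have "\<nu> * \<rho> ^ j \<le> Sup (range (peak_fun j U (point (Suc j) c))) - peak_fun j U (point (Suc j) c)
       (out (final_hist lam \<Lambda> (masked_fidelities as lam t (plateau_fun j U) (peak_fun j U (point (Suc j) c))) Q))"
      by (simp add: Sup_range_peak_fun)
    then show ?thesis by (rule ennreal_leI)
  qed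
qed (use nu_pos rho_pos in simp_all)

lemma plateau_instance_regret_ge:
  fixes Q :: "'w \<Rightarrow> 'x hist \<Rightarrow> 'x \<times> real" and out :: "'w \<Rightarrow> 'x hist \<Rightarrow> 'x"
  assumes as: "asm_params_ok as" and lam: "bij_betw lam {0..1} {1..}" and M: "prob_space M"
    and Q: "\<And>w H. snd (Q w H) \<in> {0..1}"
    and U: "\<And>g. g \<le> j \<Longrightarrow> U \<le> K ^ (j - g) * nat \<lfloor>\<rho> powr (- d * real g)\<rfloor>" and U_pos: "1 \<le> U"
    and t: "\<nu> * \<rho> ^ j \<le> t"
    and budget: "ereal \<Lambda> \<le> ereal F * inv_Phibar as t" and F: "max 0 F < real U"
  shows "\<exists>f \<in> fun_class K P \<nu> \<rho> d C. \<exists>fz \<in> fid_class as f lam.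
           ennreal (\<nu> * \<rho> ^ j / 2) \<le> simple_regret M Q out lam \<Lambda> f fz"
proof -
  have UK: "U \<le> K ^ j" using U[of 0] rho_pos by simp
  show ?thesis
  proof (rule exists_masked_instance_regret_ge[OF as lam M, where I="{..<K * U}"
        and f="\<lambda>c. peak_fun j U (point (Suc j) c)" and g="plateau_fun j U"])
    show "finite {..<K * U}" and "{..<K * U} \<noteq> {}" using K_pos U_pos by (simp_all add: lessThan_empty_iff)
    fix c assume "c \<in> {..<K * U}"
    then have c: "cell_of j (point (Suc j) c) < U" using cell_of_point_Suc(2)[OF UK] by simp
    show "peak_fun j U (point (Suc j) c) \<in> fun_class K P \<nu> \<rho> d C"
      by (rule peak_fun_in_fun_class[OF U c])
    show "\<bar>peak_fun j U (point (Suc j) c) x - plateau_fun j U x\<bar> \<le> t" for x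
      using abs_peak_fun_minus_plateau_fun_le[OF c, of x] t by linarith
  next
    show "of_nat (card {..<K * U}) * ennreal (\<nu> * \<rho> ^ j / 2) \<le>
      (\<Sum>c<K * U. ennreal (Sup (range (peak_fun j U (point (Suc j) c))) - peak_fun j U (point (Suc j) c)
        (out w (final_hist lam \<Lambda> (masked_fidelities as lam t (plateau_fun j U) (peak_fun j U (point (Suc j) c))) (Q w)))))"
      for w using plateau_regret_sum_ge[OF lam Q budget F UK] .
  qed
qed

lemma plateau_size_gt:
  assumes gJ: "g \<le> J" and sJ: "\<rho> ^ J \<le> s" and s: "0 < s"
  shows "s powr (- d) / real K < real (K ^ (J - g) * nat \<lfloor>\<rho> powr (- d * real g)\<rfloor>)"
proof -
  define y where "y = \<rho> powr (- d * real g)"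
  have y: "1 \<le> y" unfolding y_def by (rule rho_powr_neg_ge_1)
  have "s powr (- d) \<le> (\<rho> ^ J) powr (- d)"
    using sJ s rho_pos d_nonneg by (intro powr_mono2') auto
  also have "\<dots> = \<rho> powr (- d * real J)"
    using rho_pos by (simp add: powr_realpow[symmetric] powr_powr mult.commute)
  also have "\<dots> = y * (\<rho> powr (- d)) ^ (J - g)"
    unfolding y_def using rho_pos gJ by (simp add: powr_power powr_add[symmetric] algebra_simps of_nat_diff)
  also have "\<dots> \<le> y * real K ^ (J - g)"
    using rho_powr_neg_d_le_K y by (intro mult_left_mono power_mono) auto
  finally have "s powr (- d) / 2 \<le> real K ^ (J - g) * (y / 2)" by (simp add: mult.commute)
  moreover have "s powr (- d) / real K \<le> s powr (- d) / 2" using K_ge_2 by (intro divide_left_mono) auto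
  moreover have "real K ^ (J - g) * (y / 2) < real K ^ (J - g) * real (nat \<lfloor>y\<rfloor>)"
    using real_nat_floor_gt_half[OF y] K_pos by (intro mult_strict_left_mono) auto
  ultimately have "s powr (- d) / real K < real K ^ (J - g) * real (nat \<lfloor>y\<rfloor>)" by linarith
  then show ?thesis unfolding y_def by simp
qed

lemma exists_plateau_size:
  assumes "\<rho> ^ J \<le> s" and "0 < s"
  obtains U where "\<And>g. g \<le> J \<Longrightarrow> U \<le> K ^ (J - g) * nat \<lfloor>\<rho> powr (- d * real g)\<rfloor>"
    and "s powr (- d) / real K < real U"
proof
  let ?U = "Min ((\<lambda>g. K ^ (J - g) * nat \<lfloor>\<rho> powr (- d * real g)\<rfloor>) ` {..J})"
  show "?U \<le> K ^ (J - g) * nat \<lfloor>\<rho> powr (- d * real g)\<rfloor>" if "g \<le> J" for g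
    using that by (intro Min_le) auto
  have "?U \<in> (\<lambda>g. K ^ (J - g) * nat \<lfloor>\<rho> powr (- d * real g)\<rfloor>) ` {..J}" by (intro Min_in) auto
  then obtain g where "g \<in> {..J}" "?U = K ^ (J - g) * nat \<lfloor>\<rho> powr (- d * real g)\<rfloor>" by (rule imageE)
  then show "s powr (- d) / real K < real ?U" using plateau_size_gt[OF _ assms] by simp
qed

lemma exists_plateau_depth:
  fixes S :: "real set"
  assumes "S \<noteq> {}" and S: "\<And>r. r \<in> S \<Longrightarrow> 0 < r \<and> r \<le> \<nu> * \<rho> / 2"
  obtains J r where "r \<in> S" and "\<rho> ^ J \<le> 2 * r / (\<nu> * \<rho>)" and "\<And>r'. r' \<in> S \<Longrightarrow> r' \<le> \<nu> * \<rho> ^ J / 2"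
proof -
  define s where "s r = 2 * r / (\<nu> * \<rho>)" for r
  have "\<exists>j. \<exists>r \<in> S. \<rho> ^ j \<le> s r"
  proof -
    obtain r where r: "r \<in> S" using assms(1) by blast
    then have "0 < s r" using S nu_pos rho_pos unfolding s_def by simp
    then obtain j where "\<rho> ^ j < s r" using real_arch_pow_inv[OF _ rho_less_1] by blast
    then show ?thesis using r less_imp_le by blast
  qed
  then obtain J where J: "\<exists>r \<in> S. \<rho> ^ J \<le> s r" and least: "\<And>j r. j < J \<Longrightarrow> r \<in> S \<Longrightarrow> s r < \<rho> ^ j"
    unfolding exists_least_iff[of "\<lambda>j. \<exists>r \<in> S. \<rho> ^ j \<le> s r"] by (auto simp: not_le)
  have "r' \<le> \<nu> * \<rho> ^ J / 2" if r': "r' \<in> S" for r'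
  proof (cases J)
    case 0
    have "\<nu> * \<rho> \<le> \<nu>" using nu_pos rho_less_1 by simp
    then show ?thesis using S[OF r'] 0 by simp
  next
    case (Suc J')
    then have "2 * r' / (\<nu> * \<rho>) < \<rho> ^ J'" using least[OF _ r'] unfolding s_def by simp
    then show ?thesis using Suc nu_pos rho_pos by (simp add: divide_less_eq mult_ac)
  qed
  then show ?thesis using that J unfolding s_def by blast
qed

lemma plateau_lower_bound:
  fixes Q :: "'w \<Rightarrow> 'x hist \<Rightarrow> 'x \<times> real" and out :: "'w \<Rightarrow> 'x hist \<Rightarrow> 'x"
  assumes as: "asm_params_ok as" and lam: "bij_betw lam {0..1} {1..}" and M: "prob_space M"
    and Q: "\<And>w H. snd (Q w H) \<in> {0..1}"
  shows "\<exists>f \<in> fun_class K P \<nu> \<rho> d C. \<exists>fz \<in> fid_class as f lam.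
        simple_regret M Q out lam \<Lambda> f fz \<ge>
          (SUP r \<in> {r. 0 < r \<and> r \<le> \<nu> * \<rho> / 2 \<and>
                      ereal \<Lambda> \<le> ereal (1 / real K * (2 * r / (\<nu> * \<rho>)) powr (- d))
                                   * inv_Phibar as (2 * r / \<rho>)}. ennreal r)"
proof -
  define S where "S = {r. 0 < r \<and> r \<le> \<nu> * \<rho> / 2 \<and>
    ereal \<Lambda> \<le> ereal (1 / real K * (2 * r / (\<nu> * \<rho>)) powr (- d)) * inv_Phibar as (2 * r / \<rho>)}"
  have "\<exists>f \<in> fun_class K P \<nu> \<rho> d C. \<exists>fz \<in> fid_class as f lam.
          (SUP r \<in> S. ennreal r) \<le> simple_regret M Q out lam \<Lambda> f fz"
  proof (rule exists_ge_SUP[OF fun_class_fid_class_nonempty[OF as lam]])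
    assume "S \<noteq> {}"
    then obtain J r where r: "r \<in> S" "\<rho> ^ J \<le> 2 * r / (\<nu> * \<rho>)"
      and bound: "\<And>r'. r' \<in> S \<Longrightarrow> r' \<le> \<nu> * \<rho> ^ J / 2"
      by (rule exists_plateau_depth) (auto simp: S_def)
    define F where "F = 1 / real K * (2 * r / (\<nu> * \<rho>)) powr (- d)"
    have s: "0 < 2 * r / (\<nu> * \<rho>)" using r(1) nu_pos rho_pos unfolding S_def by simp
    obtain U where U: "\<And>g. g \<le> J \<Longrightarrow> U \<le> K ^ (J - g) * nat \<lfloor>\<rho> powr (- d * real g)\<rfloor>"
      and U_gt: "F < real U"
      using exists_plateau_size[OF r(2) s] unfolding F_def by auto
    have "0 \<le> F" unfolding F_def by simp
    then have F: "max 0 F < real U" and "1 \<le> U" using U_gt by simp_all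
    have "\<nu> * \<rho> ^ J \<le> \<nu> * (2 * r / (\<nu> * \<rho>))" using r(2) nu_pos by (intro mult_left_mono) auto
    also have "\<dots> = 2 * r / \<rho>" using nu_pos by simp
    finally have t: "\<nu> * \<rho> ^ J \<le> 2 * r / \<rho>" .
    have budget: "ereal \<Lambda> \<le> ereal F * inv_Phibar as (2 * r / \<rho>)"
      using r(1) unfolding S_def F_def by simp
    have "\<exists>f \<in> fun_class K P \<nu> \<rho> d C. \<exists>fz \<in> fid_class as f lam.
        ennreal (\<nu> * \<rho> ^ J / 2) \<le> simple_regret M Q out lam \<Lambda> f fz"
      by (rule plateau_instance_regret_ge[OF as lam M Q U \<open>1 \<le> U\<close> t budget F])
    then show "\<exists>v. (\<forall>r \<in> S. r \<le> v) \<and> (\<exists>f \<in> fun_class K P \<nu> \<rho> d C. \<exists>fz \<in> fid_class as f lam.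
        ennreal v \<le> simple_regret M Q out lam \<Lambda> f fz)"
      using bound by blast
  qed
  then show ?thesis unfolding S_def by simp
qed

end

section \<open>Bit strings\<close>

definition bitstrings :: "nat \<Rightarrow> bool list set" where
  "bitstrings n = {p. length p = n}"

lemma finite_bitstrings: "finite (bitstrings n)"
  unfolding bitstrings_def using finite_lists_length_eq[of "UNIV :: bool set" n] by simp

lemma card_bitstrings: "card (bitstrings n) = 2 ^ n"
  unfolding bitstrings_def using card_lists_length_eq[of "UNIV :: bool set" n] by simp

lemma bitstrings_nonempty: "bitstrings n \<noteq> {}"
  using card_bitstrings[of n] by auto

lemma bij_betw_append_bitstrings:
  assumes "length a = k" "k \<le> L"
  shows "bij_betw (\<lambda>b. a @ b) (bitstrings (L - k)) {p \<in> bitstrings L. take k p = a}"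
proof (rule bij_betwI')
  show "a @ b \<in> {p \<in> bitstrings L. take k p = a}" if "b \<in> bitstrings (L - k)" for b
    using assms that unfolding bitstrings_def by auto
  show "\<exists>b \<in> bitstrings (L - k). p = a @ b" if "p \<in> {p \<in> bitstrings L. take k p = a}" for p
    using that assms unfolding bitstrings_def by (intro bexI[of _ "drop k p"]) (auto, metis append_take_drop_id)
qed simp

lemma card_bitstrings_prefix:
  "length a = k \<Longrightarrow> k \<le> L \<Longrightarrow> card {p \<in> bitstrings L. take k p = a} = 2 ^ (L - k)"
  using bij_betw_same_card[OF bij_betw_append_bitstrings] card_bitstrings by metis

lemma sum_bitstrings_prefix:
  "length a = k \<Longrightarrow> k \<le> L \<Longrightarrow>
    (\<Sum>b \<in> bitstrings (L - k). F (a @ b)) = (\<Sum>p \<in> {p \<in> bitstrings L. take k p = a}. F p)"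
  using sum.reindex_bij_betw[OF bij_betw_append_bitstrings, of a k L F] by simp

lemma take_eq_take_le: "take r p = take r p' \<Longrightarrow> k \<le> r \<Longrightarrow> take k p = take k p'"
  by (metis min.absorb1 take_take)

text \<open>Optional stopping for uniformly random bits: \<open>\<kappa>\<close> depends only on the bits it stops after.\<close>
lemma sum_bitstrings_stopped:
  fixes \<kappa> :: "bool list \<Rightarrow> nat" and F :: "bool list \<Rightarrow> real"
  assumes le: "\<And>p. p \<in> bitstrings L \<Longrightarrow> \<kappa> p \<le> L"
    and stop: "\<And>p p'. p \<in> bitstrings L \<Longrightarrow> p' \<in> bitstrings L \<Longrightarrow> take (\<kappa> p) p = take (\<kappa> p) p' \<Longrightarrow> \<kappa> p' = \<kappa> p"
  shows "(\<Sum>p \<in> bitstrings L. (\<Sum>b \<in> bitstrings (L - \<kappa> p). F (take (\<kappa> p) p @ b)) / 2 ^ (L - \<kappa> p))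
       = (\<Sum>p \<in> bitstrings L. F p)"
proof -
  let ?same = "\<lambda>p p'. take (\<kappa> p) p' = take (\<kappa> p) p"
  have len: "length (take (\<kappa> p) p) = \<kappa> p" if "p \<in> bitstrings L" for p
    using le[OF that] that unfolding bitstrings_def by simp
  have swap: "(if ?same p p' then F p' / 2 ^ (L - \<kappa> p) else 0)
      = (if ?same p' p then F p' / 2 ^ (L - \<kappa> p') else 0)"
    if "p \<in> bitstrings L" "p' \<in> bitstrings L" for p p'
  proof (cases "?same p p'")
    case True
    then have "\<kappa> p' = \<kappa> p" using stop[OF that] by metis
    then show ?thesis using True by simp
  next
    case False
    then have "\<not> ?same p' p" using stop[OF that(2,1)] by metis
    then show ?thesis using False by simp
  qed
  have "(\<Sum>b \<in> bitstrings (L - \<kappa> p). F (take (\<kappa> p) p @ b))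
      = (\<Sum>p' \<in> bitstrings L. if ?same p p' then F p' else 0)" if p: "p \<in> bitstrings L" for p
    using sum_bitstrings_prefix[OF len[OF p] le[OF p], of F] finite_bitstrings
    by (simp add: sum.inter_filter)
  then have "(\<Sum>p \<in> bitstrings L. (\<Sum>b \<in> bitstrings (L - \<kappa> p). F (take (\<kappa> p) p @ b)) / 2 ^ (L - \<kappa> p))
      = (\<Sum>p \<in> bitstrings L. \<Sum>p' \<in> bitstrings L. if ?same p p' then F p' / 2 ^ (L - \<kappa> p) else 0)"
    by (simp add: sum_divide_distrib) (intro sum.cong refl, simp)
  also have "\<dots> = (\<Sum>p' \<in> bitstrings L. \<Sum>p \<in> bitstrings L. if ?same p p' then F p' / 2 ^ (L - \<kappa> p) else 0)"
    by (rule sum.swap)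
  also have "\<dots> = (\<Sum>p' \<in> bitstrings L. \<Sum>p \<in> bitstrings L. if ?same p' p then F p' / 2 ^ (L - \<kappa> p') else 0)"
    by (rule sum.cong[OF refl], rule sum.cong[OF refl], rule swap)
  also have "\<dots> = (\<Sum>p' \<in> bitstrings L. real (card {p \<in> bitstrings L. take (\<kappa> p') p = take (\<kappa> p') p'}) * (F p' / 2 ^ (L - \<kappa> p')))"
    using finite_bitstrings by (simp add: sum.inter_filter[symmetric])
  also have "\<dots> = (\<Sum>p \<in> bitstrings L. F p)"
    by (rule sum.cong[OF refl]) (simp add: card_bitstrings_prefix[OF len le])
  finally show ?thesis .
qed

lemma power_eq_1_minus_geometric_sum:
  fixes q :: real
  assumes "D \<le> T"
  shows "q ^ D = 1 - (1 - q) * (\<Sum>i<T. if i < D then q ^ i else 0)"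
proof -
  have "(\<Sum>i<T. if i < D then q ^ i else 0) = (\<Sum>i<D. q ^ i)"
    using assms by (simp add: sum.If_cases Int_def lessThan_def) (metis (no_types, lifting) Collect_cong less_le_trans)
  moreover have "1 - q ^ D = (1 - q) * (\<Sum>i<D. q ^ i)" by (rule one_diff_power_eq)
  ultimately show ?thesis by simp
qed

text \<open>\<open>q / (2 - q)\<close> is the mean of \<open>q\<^sup>D\<close> for \<open>D\<close> with \<open>P(D > i) = 2\<^sup>-\<^sup>i\<close>, the extreme case
  of the tail hypothesis.\<close>
lemma sum_power_ge_if_geometric_tail:
  fixes D :: "'b \<Rightarrow> nat" and q :: real
  assumes B: "finite B" and q: "0 < q" "q < 1"
    and DT: "\<And>b. b \<in> B \<Longrightarrow> D b \<le> T"
    and tail: "\<And>i. i < T \<Longrightarrow> real (card {b \<in> B. i < D b}) \<le> real (card B) / 2 ^ i"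
  shows "real (card B) * (q / (2 - q)) \<le> (\<Sum>b\<in>B. q ^ D b)"
proof -
  define X where "X = (\<Sum>b\<in>B. \<Sum>i<T. if i < D b then q ^ i else 0)"
  have "X = (\<Sum>i<T. q ^ i * real (card {b \<in> B. i < D b}))"
    unfolding X_def using B by (subst sum.swap) (simp add: sum.inter_filter[symmetric] mult.commute)
  also have "\<dots> \<le> (\<Sum>i<T. q ^ i * (real (card B) / 2 ^ i))"
    using tail q by (intro sum_mono mult_left_mono) auto
  also have "\<dots> = real (card B) * (\<Sum>i<T. (q / 2) ^ i)"
    by (simp add: sum_distrib_left power_divide mult.commute)
  also have "\<dots> \<le> real (card B) * (2 / (2 - q))"
  proof (intro mult_left_mono)
    have "(\<Sum>i<T. (q / 2) ^ i) = (1 - (q / 2) ^ T) / (1 - q / 2)"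
      using q by (simp add: sum_gp_strict)
    also have "\<dots> \<le> 1 / (1 - q / 2)" using q by (intro divide_right_mono) auto
    finally show "(\<Sum>i<T. (q / 2) ^ i) \<le> 2 / (2 - q)" by (simp add: field_simps)
  qed simp
  finally have "(1 - q) * X \<le> (1 - q) * (real (card B) * (2 / (2 - q)))"
    using q by (intro mult_left_mono) auto
  also have "\<dots> = real (card B) - real (card B) * (q / (2 - q))"
    using q by (simp add: field_simps)
  finally have "real (card B) * (q / (2 - q)) \<le> real (card B) - (1 - q) * X" by linarith
  also have "\<dots> = (\<Sum>b\<in>B. q ^ D b)"
    unfolding X_def using power_eq_1_minus_geometric_sum[OF DT]
    by (simp add: sum_subtractf sum_distrib_left)
  finally show ?thesis .
qed

section \<open>The tree bound\<close>

context partition_tree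
begin

text \<open>The index of the depth-\<open>length p\<close> cell reached from the root by descending, at each
  level, into child \<open>0\<close> or child \<open>1\<close> according to the bits of \<open>p\<close>.\<close>
definition path_index :: "bool list \<Rightarrow> nat" where
  "path_index p = foldl (\<lambda>i b. K * i + (if b then 1 else 0)) 0 p"

lemma path_index_Nil [simp]: "path_index [] = 0"
  unfolding path_index_def by simp

lemma path_index_snoc: "path_index (p @ [b]) = K * path_index p + (if b then 1 else 0)"
  unfolding path_index_def by simp

lemma bit_less_K: "(if b then 1 else 0) < K"
  using K_ge_2 by auto

lemma path_index_append: "path_index (p @ q) = path_index p * K ^ length q + path_index q"
proof (induction q rule: rev_induct)
  case (snoc b q)
  have "path_index (p @ q @ [b]) = K * path_index (p @ q) + (if b then 1 else 0)"
    using path_index_snoc[of "p @ q" b] by simp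
  also have "\<dots> = path_index p * K ^ length (q @ [b]) + path_index (q @ [b])"
    using snoc by (simp add: path_index_snoc algebra_simps)
  finally show ?case by simp
qed simp

lemma path_index_less: "path_index p < K ^ length p"
proof (induction p rule: rev_induct)
  case (snoc b p)
  have "path_index (p @ [b]) < K * path_index p + K"
    using bit_less_K[of b] by (simp add: path_index_snoc)
  also have "\<dots> = K * (path_index p + 1)" by simp
  also have "\<dots> \<le> K * K ^ length p" using snoc by (intro mult_left_mono) auto
  finally show ?case by simp
qed simp

lemma path_index_inj: "length p = length q \<Longrightarrow> path_index p = path_index q \<Longrightarrow> p = q"
proof (induction p arbitrary: q rule: rev_induct)
  case (snoc b p)
  obtain q' c where q: "q = q' @ [c]" using snoc.prems(1)
    by (metis length_append_singleton list.size(3) nat.distinct(1) rev_exhaust)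
  have e: "K * path_index p + (if b then 1 else 0) = K * path_index q' + (if c then 1 else 0)"
    using snoc.prems(2) q by (simp add: path_index_snoc)
  have "(K * path_index p + (if b then 1 else 0)) mod K = (if b then 1 else 0)"
    "(K * path_index q' + (if c then 1 else 0)) mod K = (if c then 1 else 0)"
    using bit_less_K[of b] bit_less_K[of c] by simp_all
  then have bc: "(if b then 1 else 0) = (if c then 1 else (0::nat))" using e by metis
  then have "b = c" by (cases b; cases c) auto
  moreover have "path_index p = path_index q'" using e bc K_pos by simp
  ultimately show ?case using snoc.IH[of q'] snoc.prems(1) q by simp
qed simp

lemma path_index_take:
  assumes "k \<le> length p"
  shows "path_index (take k p) = path_index p div K ^ (length p - k)"
proof -
  have "path_index p = path_index (take k p) * K ^ (length p - k) + path_index (drop k p)"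
    using path_index_append[of "take k p" "drop k p"] assms by simp
  moreover have "path_index (drop k p) < K ^ (length p - k)" using path_index_less[of "drop k p"] by simp
  ultimately show ?thesis using K_pos by simp
qed

end

context regret_lower_bound
begin

definition theta :: real where
  "theta = \<rho> / (2 - \<rho>)"

lemma theta_pos: "0 < theta" and theta_le_1: "theta \<le> 1"
  unfolding theta_def using rho_pos rho_less_1 by simp_all

lemma rho_cube_le_theta: "\<rho> ^ 3 \<le> theta"
proof -
  have "1 - \<rho> ^ 2 * (2 - \<rho>) = (1 - \<rho>) * (1 + \<rho> * (1 - \<rho>))"
    by (simp add: algebra_simps power2_eq_square)
  also have "\<dots> \<ge> 0" using rho_pos rho_less_1 by simp
  finally have "\<rho> * (\<rho> ^ 2 * (2 - \<rho>)) \<le> \<rho> * 1" using rho_pos by (intro mult_left_mono) auto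
  then show ?thesis unfolding theta_def using rho_less_1
    by (simp add: pos_le_divide_eq power3_eq_cube power2_eq_square mult_ac)
qed

end

locale tree_instances = regret_lower_bound K P \<nu> \<rho> d C
  for K and P :: "nat \<Rightarrow> nat \<Rightarrow> 'x set" and \<nu> \<rho> d C +
  fixes m L :: nat
begin

definition leaf :: "bool list \<Rightarrow> 'x" where
  "leaf p = point (m + L) (path_index p)"

lemma cell_of_leaf:
  assumes p: "p \<in> bitstrings L" and k: "k \<le> L"
  shows "cell_of (m + k) (leaf p) = path_index (take k p)"
proof -
  have "path_index p < K ^ L" using path_index_less[of p] p unfolding bitstrings_def by simp
  also have "\<dots> \<le> K ^ (m + L)" using K_pos by (intro power_increasing) auto
  finally have "path_index p < K ^ (m + L)" .
  then have "cell_of (m + L) (leaf p) = path_index p" unfolding leaf_def by (rule cell_of_point)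
  then show ?thesis using cell_of_le[of "m + k" "m + L"] path_index_take[of k p] p k
    unfolding bitstrings_def by simp
qed

lemma cell_of_leaf_le: "p \<in> bitstrings L \<Longrightarrow> g \<le> m \<Longrightarrow> cell_of g (leaf p) = 0"
  using cell_of_leaf[of p 0] cell_of_le[of g m "leaf p"] by simp

definition agree_levels :: "'x \<Rightarrow> bool list \<Rightarrow> nat set" where
  "agree_levels x p = {k. k \<le> L \<and> cell_of (m + k) x = path_index (take k p)}"

text \<open>The number of bits of \<open>p\<close> that the value of the peak function at \<open>x\<close> depends on.\<close>
definition revealed_bits :: "'x \<Rightarrow> bool list \<Rightarrow> nat" where
  "revealed_bits x p = (if cell_of m x = 0 then min (Suc (Max (agree_levels x p))) L else 0)"

lemma revealed_bits_le: "revealed_bits x p \<le> L"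
  unfolding revealed_bits_def by auto

lemma agree_levels_down:
  assumes p: "p \<in> bitstrings L" and k: "k \<in> agree_levels x p" and k': "k' \<le> k"
  shows "k' \<in> agree_levels x p"
proof -
  have kL: "k \<le> L" and e: "cell_of (m + k) x = path_index (take k p)"
    using k unfolding agree_levels_def by auto
  have "cell_of (m + k') x = path_index (take k p) div K ^ (k - k')"
    using cell_of_le[of "m + k'" "m + k" x] e k' by simp
  also have "\<dots> = path_index (take k' p)"
    using path_index_take[of k' "take k p"] p kL k' unfolding bitstrings_def by (simp add: min_def)
  finally show ?thesis using kL k' unfolding agree_levels_def by simp
qed

lemma zero_in_agree_levels_iff: "0 \<in> agree_levels x p \<longleftrightarrow> cell_of m x = 0"
  unfolding agree_levels_def by simp

lemma agree_levels_eq_empty: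
  assumes "p \<in> bitstrings L" and "cell_of m x \<noteq> 0"
  shows "agree_levels x p = {}"
proof (rule ccontr)
  assume "agree_levels x p \<noteq> {}"
  then obtain k where "k \<in> agree_levels x p" by blast
  then have "0 \<in> agree_levels x p" using agree_levels_down[OF assms(1)] by blast
  then show False using assms(2) by (simp add: zero_in_agree_levels_iff)
qed

lemma Max_agree_levels:
  assumes "cell_of m x = 0"
  shows "Max (agree_levels x p) \<in> agree_levels x p" and "k \<in> agree_levels x p \<Longrightarrow> k \<le> Max (agree_levels x p)"
proof -
  have "finite (agree_levels x p)" unfolding agree_levels_def by simp
  moreover have "agree_levels x p \<noteq> {}" using assms zero_in_agree_levels_iff by blast
  ultimately show "Max (agree_levels x p) \<in> agree_levels x p" and "k \<in> agree_levels x p \<Longrightarrow> k \<le> Max (agree_levels x p)"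
    by simp_all
qed

lemma common_level_leaf_iff:
  assumes p: "p \<in> bitstrings L" and g: "g \<le> m + L"
  shows "cell_of g x = cell_of g (leaf p) \<longleftrightarrow> (if g \<le> m then cell_of g x = 0 else g - m \<in> agree_levels x p)"
proof (cases "g \<le> m")
  case True
  then show ?thesis using cell_of_leaf_le[OF p True] by simp
next
  case False
  then have "cell_of g (leaf p) = path_index (take (g - m) p)" and "g - m \<le> L"
    using cell_of_leaf[OF p, of "g - m"] g by simp_all
  then show ?thesis using False unfolding agree_levels_def by simp
qed

lemma agree_levels_cong:
  assumes p: "p \<in> bitstrings L" and p': "p' \<in> bitstrings L"
    and prefix: "take (revealed_bits x p) p = take (revealed_bits x p) p'"
  shows "agree_levels x p' = agree_levels x p"
proof (cases "cell_of m x = 0")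
  case False
  then show ?thesis using agree_levels_eq_empty p p' by simp
next
  case x: True
  define a where "a = Max (agree_levels x p)"
  have a_max: "k \<le> a" if "k \<in> agree_levels x p" for k
    using Max_agree_levels(2)[OF x that] unfolding a_def .
  show ?thesis
  proof (cases "Suc a < L")
    case False
    then have "revealed_bits x p = L" using x unfolding revealed_bits_def a_def by simp
    then show ?thesis using prefix p p' unfolding bitstrings_def by simp
  next
    case True
    then have "revealed_bits x p = Suc a" using x unfolding revealed_bits_def a_def by simp
    then have same: "take k p = take k p'" if "k \<le> Suc a" for k
      using take_eq_take_le[OF prefix] that by simp
    have "k \<in> agree_levels x p" if k: "k \<in> agree_levels x p'" for k
    proof (cases "k \<le> Suc a")
      case True
      then show ?thesis using k same unfolding agree_levels_def by simp
    next
      case False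
      then have "Suc a \<in> agree_levels x p'" using agree_levels_down[OF p' k] by simp
      then have "Suc a \<in> agree_levels x p" using same[of "Suc a"] unfolding agree_levels_def by simp
      then show ?thesis using a_max by fastforce
    qed
    moreover have "k \<in> agree_levels x p'" if k: "k \<in> agree_levels x p" for k
      using k a_max[OF k] same[of k] unfolding agree_levels_def by simp
    ultimately show ?thesis by blast
  qed
qed

lemma common_levels_leaf_cong:
  assumes p: "p \<in> bitstrings L" and p': "p' \<in> bitstrings L"
    and agree: "agree_levels x p' = agree_levels x p"
  shows "cell_of g x = cell_of g (leaf p') \<longleftrightarrow> cell_of g x = cell_of g (leaf p)"
proof (cases "L \<in> agree_levels x p")
  case True
  moreover have "L \<in> agree_levels x p'" using True agree by simp
  ultimately have "path_index p' = path_index p" using p p' unfolding agree_levels_def bitstrings_def by simp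
  then have "p' = p" using path_index_inj p p' unfolding bitstrings_def by simp
  then show ?thesis by simp
next
  case False
  show ?thesis
  proof (cases "g \<le> m + L")
    case True
    then show ?thesis using common_level_leaf_iff[OF p True] common_level_leaf_iff[OF p' True] agree by simp
  next
    case beyond: False
    have "cell_of g x \<noteq> cell_of g (leaf q)" if q: "q \<in> bitstrings L" "agree_levels x q = agree_levels x p" for q
    proof
      assume "cell_of g x = cell_of g (leaf q)"
      then have "cell_of (m + L) x = cell_of (m + L) (leaf q)" using cell_of_eq_mono[of "m + L" g x "leaf q"] beyond by simp
      then have "L \<in> agree_levels x q" using cell_of_leaf[OF q(1)] unfolding agree_levels_def by simp
      then show False using False q(2) by simp
    qed
    then have "cell_of g x \<noteq> cell_of g (leaf p')" "cell_of g x \<noteq> cell_of g (leaf p)"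
      using p p' agree by simp_all
    then show ?thesis by simp
  qed
qed

lemma revealed_prefix_determines:
  assumes p: "p \<in> bitstrings L" and p': "p' \<in> bitstrings L"
    and prefix: "take (revealed_bits x p) p = take (revealed_bits x p) p'"
  shows "revealed_bits x p' = revealed_bits x p"
    and "peak_fun j U (leaf p') x = peak_fun j U (leaf p) x"
proof -
  have agree: "agree_levels x p' = agree_levels x p" by (rule agree_levels_cong[OF p p' prefix])
  then show "revealed_bits x p' = revealed_bits x p" unfolding revealed_bits_def by simp
  have "peak_levels j U (leaf p') x = peak_levels j U (leaf p) x"
    using common_levels_leaf_cong[OF p p' agree] unfolding peak_levels_def by auto
  then show "peak_fun j U (leaf p') x = peak_fun j U (leaf p) x" unfolding peak_fun_def by simp
qed

lemma card_revealed_bits_gt_le: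
  assumes a: "length a = k" and i: "i < L - k"
  shows "card {b \<in> bitstrings (L - k). k + i < revealed_bits x (a @ b)} \<le> 2 ^ (L - k - i)"
proof -
  let ?B = "{b \<in> bitstrings (L - k). path_index (a @ take i b) = cell_of (m + (k + i)) x}"
  have fin: "finite {b \<in> bitstrings (L - k). Q b}" for Q
    using finite_bitstrings by simp
  have "b \<in> ?B" if b: "b \<in> bitstrings (L - k)" and gt: "k + i < revealed_bits x (a @ b)" for b
  proof -
    have ab: "a @ b \<in> bitstrings L" using a b i unfolding bitstrings_def by simp
    have x: "cell_of m x = 0" using gt unfolding revealed_bits_def by (simp split: if_splits)
    then have "k + i \<le> Max (agree_levels x (a @ b))" using gt unfolding revealed_bits_def by simp
    then have "k + i \<in> agree_levels x (a @ b)" using agree_levels_down[OF ab Max_agree_levels(1)[OF x]] by blast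
    then show ?thesis using a b unfolding agree_levels_def by simp
  qed
  then have "{b \<in> bitstrings (L - k). k + i < revealed_bits x (a @ b)} \<subseteq> ?B" by blast
  then have "card {b \<in> bitstrings (L - k). k + i < revealed_bits x (a @ b)} \<le> card ?B"
    by (rule card_mono[OF fin])
  moreover have "card ?B \<le> 2 ^ (L - k - i)"
  proof (cases "?B = {}")
    case False
    then obtain b0 where b0: "b0 \<in> ?B" by blast
    have "take i b = take i b0" if "b \<in> ?B" for b
      using that b0 path_index_inj[of "a @ take i b" "a @ take i b0"] i unfolding bitstrings_def by simp
    then have "?B \<subseteq> {b \<in> bitstrings (L - k). take i b = take i b0}" (is "_ \<subseteq> ?C") by blast
    then have "card ?B \<le> card ?C" by (rule card_mono[OF fin])
    also have "card ?C = 2 ^ (L - k - i)"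
      using b0 i by (intro card_bitstrings_prefix) (simp_all add: bitstrings_def)
    finally show ?thesis .
  next
    case True
    then show ?thesis by (subst True) simp
  qed
  ultimately show ?thesis by linarith
qed

lemma sum_power_revealed_bits_ge:
  assumes a: "length a = k" and k: "k \<le> L"
  shows "2 ^ (L - k) * (\<rho> / (2 - \<rho>)) * \<rho> ^ k \<le> (\<Sum>b \<in> bitstrings (L - k). \<rho> ^ max k (revealed_bits x (a @ b)))"
proof -
  define D where "D b = max k (revealed_bits x (a @ b)) - k" for b
  have "real (card (bitstrings (L - k))) * (\<rho> / (2 - \<rho>)) \<le> (\<Sum>b \<in> bitstrings (L - k). \<rho> ^ D b)"
  proof (rule sum_power_ge_if_geometric_tail[OF finite_bitstrings rho_pos rho_less_1])
    show "D b \<le> L - k" for b unfolding D_def using revealed_bits_le[of x "a @ b"] by simp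
    fix i assume i: "i < L - k"
    have "{b \<in> bitstrings (L - k). i < D b} = {b \<in> bitstrings (L - k). k + i < revealed_bits x (a @ b)}"
      unfolding D_def by auto
    then have "real (card {b \<in> bitstrings (L - k). i < D b}) \<le> 2 ^ (L - k - i)"
      using card_revealed_bits_gt_le[OF a i, of x] by (metis of_nat_le_iff of_nat_numeral of_nat_power)
    also have "(2::real) ^ (L - k - i) = 2 ^ (L - k) / 2 ^ i" using i by (simp add: power_diff power_add)
    finally show "real (card {b \<in> bitstrings (L - k). i < D b}) \<le> real (card (bitstrings (L - k))) / 2 ^ i"
      by (simp add: card_bitstrings)
  qed
  then have "2 ^ (L - k) * (\<rho> / (2 - \<rho>)) \<le> (\<Sum>b \<in> bitstrings (L - k). \<rho> ^ D b)"
    by (simp add: card_bitstrings)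
  then have "\<rho> ^ k * (2 ^ (L - k) * (\<rho> / (2 - \<rho>))) \<le> \<rho> ^ k * (\<Sum>b \<in> bitstrings (L - k). \<rho> ^ D b)"
    using rho_pos by (intro mult_left_mono) auto
  also have "\<dots> = (\<Sum>b \<in> bitstrings (L - k). \<rho> ^ max k (revealed_bits x (a @ b)))"
    unfolding D_def sum_distrib_left by (simp flip: power_add)
  finally show ?thesis by (simp add: mult_ac)
qed

lemma peak_regret_ge:
  assumes p: "p \<in> bitstrings L"
  shows "\<nu> * (\<rho> ^ (m + revealed_bits y p) - \<rho> ^ (m + L)) \<le> - peak_fun m 1 (leaf p) y"
proof -
  have "peak_fun m 1 (leaf p) y \<le> - \<nu> * \<rho> ^ (m + revealed_bits y p)" if "revealed_bits y p < L"
  proof -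
    have "Suc (m + revealed_bits y p) \<notin> peak_levels m 1 (leaf p) y"
    proof
      assume "Suc (m + revealed_bits y p) \<in> peak_levels m 1 (leaf p) y"
      then have common: "cell_of (m + Suc (revealed_bits y p)) y = cell_of (m + Suc (revealed_bits y p)) (leaf p)"
        unfolding peak_levels_def plateau_levels_def by simp
      show False
      proof (cases "cell_of m y = 0")
        case True
        then have "Suc (revealed_bits y p) \<in> agree_levels y p"
          using common common_level_leaf_iff[OF p, of "m + Suc (revealed_bits y p)"] that by simp
        then show False using Max_agree_levels(2)[OF True] that True unfolding revealed_bits_def by fastforce
      next
        case False
        then show False using cell_of_eq_mono[OF _ common, of m] cell_of_leaf_le[OF p] by simp
      qed
    qed
    then show ?thesis unfolding peak_fun_def by (rule level_value_le')
  qed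
  moreover have "0 \<le> \<nu> * \<rho> ^ (m + L)" using nu_pos rho_pos by simp
  moreover have "revealed_bits y p = L" if "\<not> revealed_bits y p < L"
    using revealed_bits_le[of y p] that by simp
  ultimately show ?thesis
    using peak_fun_le_0[of m 1 "leaf p" y] by (cases "revealed_bits y p < L") (auto simp: right_diff_distrib)
qed

end

locale tree_run = tree_instances K P \<nu> \<rho> d C m L
  for K and P :: "nat \<Rightarrow> nat \<Rightarrow> 'x set" and \<nu> \<rho> d C m L +
  fixes as :: asm and lam :: "real \<Rightarrow> real" and t \<Lambda> :: real and Q :: "'x hist \<Rightarrow> 'x \<times> real"
begin

definition hist :: "bool list \<Rightarrow> nat \<Rightarrow> 'x hist" where
  "hist p n = run_hist lam \<Lambda> (masked_fidelities as lam t (plateau_fun m 1) (peak_fun m 1 (leaf p))) Q n"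

definition expensive :: "'x \<times> real \<times> real \<Rightarrow> bool" where
  "expensive e \<longleftrightarrow> inv_Phibar as t \<le> ereal (lam (fst (snd e)))"

definition revealed :: "'x hist \<Rightarrow> bool list \<Rightarrow> nat" where
  "revealed H p = Max (insert 0 ((\<lambda>e. revealed_bits (fst e) p) ` {e \<in> set H. expensive e}))"

lemma revealed_le: "revealed H p \<le> L"
  unfolding revealed_def using revealed_bits_le by (subst Max_le_iff) auto

lemma revealed_ge: "e \<in> set H \<Longrightarrow> expensive e \<Longrightarrow> revealed_bits (fst e) p \<le> revealed H p"
  unfolding revealed_def by (rule Max_ge) auto

lemma revealed_mono: "set H \<subseteq> set H' \<Longrightarrow> revealed H p \<le> revealed H' p"
  unfolding revealed_def by (rule Max_mono) auto

lemma revealed_snoc: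
  "revealed (H @ [e]) p = (if expensive e then max (revealed H p) (revealed_bits (fst e) p) else revealed H p)"
proof -
  let ?R = "(\<lambda>e. revealed_bits (fst e) p) ` {e \<in> set H. expensive e}"
  have "{e' \<in> set (H @ [e]). expensive e'} =
      (if expensive e then insert e {e' \<in> set H. expensive e'} else {e' \<in> set H. expensive e'})"
    by auto
  moreover have "Max (insert (revealed_bits (fst e) p) (insert 0 ?R)) = max (revealed_bits (fst e) p) (revealed H p)"
    unfolding revealed_def by (subst Max_insert) auto
  ultimately show ?thesis unfolding revealed_def by (simp add: insert_commute max.commute)
qed

lemma revealed_cong:
  assumes p: "p \<in> bitstrings L" and p': "p' \<in> bitstrings L"
    and prefix: "take (revealed H p) p = take (revealed H p) p'"
  shows "revealed H p' = revealed H p"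
proof -
  have "revealed_bits (fst e) p' = revealed_bits (fst e) p" if "e \<in> set H" "expensive e" for e
    using revealed_prefix_determines(1)[OF p p'] take_eq_take_le[OF prefix revealed_ge[OF that]] by blast
  then have "(\<lambda>e. revealed_bits (fst e) p') ` {e \<in> set H. expensive e}
      = (\<lambda>e. revealed_bits (fst e) p) ` {e \<in> set H. expensive e}"
    by (intro image_cong) auto
  then show ?thesis unfolding revealed_def by simp
qed

lemma hist_Suc:
  "hist p (Suc n) = (let H = hist p n; (x, z) = Q H in
     if hist_cost lam H + lam z \<le> \<Lambda>
     then H @ [(x, z, masked_fidelities as lam t (plateau_fun m 1) (peak_fun m 1 (leaf p)) z x)] else H)"
  unfolding hist_def by (simp only: run_hist.simps)

text \<open>The run for \<open>p'\<close> coincides with that for \<open>p\<close> as long as \<open>p'\<close> agrees with \<open>p\<close> on the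
  bits revealed so far: cheap queries observe the common \<open>plateau_fun\<close>, expensive ones
  a value determined by the revealed bits.\<close>
lemma hist_cong:
  "p \<in> bitstrings L \<Longrightarrow> p' \<in> bitstrings L \<Longrightarrow> take (revealed (hist p n) p) p = take (revealed (hist p n) p) p'
    \<Longrightarrow> hist p' n = hist p n"
proof (induction n)
  case (Suc n)
  have "set (hist p n) \<subseteq> set (hist p (Suc n))" unfolding hist_def by (rule run_hist_mono) simp
  then have IH: "hist p' n = hist p n"
    using Suc take_eq_take_le[OF Suc.prems(3) revealed_mono] by blast
  obtain x z where xz: "Q (hist p n) = (x, z)" by fastforce
  show ?case
  proof (cases "hist_cost lam (hist p n) + lam z \<le> \<Lambda>")
    case False
    then show ?thesis using IH xz by (simp add: hist_Suc)
  next
    case True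
    let ?y = "\<lambda>p. masked_fidelities as lam t (plateau_fun m 1) (peak_fun m 1 (leaf p)) z x"
    have Hp: "hist p (Suc n) = hist p n @ [(x, z, ?y p)]" using True xz by (simp add: hist_Suc)
    have "?y p' = ?y p"
    proof (cases "expensive (x, z, ?y p)")
      case True
      then have "revealed_bits x p \<le> revealed (hist p (Suc n)) p" using revealed_ge[of _ "hist p (Suc n)"] Hp by fastforce
      then have "take (revealed_bits x p) p = take (revealed_bits x p) p'" using take_eq_take_le[OF Suc.prems(3)] by blast
      then show ?thesis using revealed_prefix_determines(2)[OF Suc.prems(1,2)] by (simp add: masked_fidelities_def)
    qed (simp add: expensive_def masked_fidelities_def not_le)
    then show ?thesis using Hp True xz IH by (simp add: hist_Suc)
  qed
qed (simp add: hist_def)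

definition n_expensive :: "'x hist \<Rightarrow> nat" where
  "n_expensive H = length (filter expensive H)"

lemma revealed_hist_cong:
  assumes "p \<in> bitstrings L" "p' \<in> bitstrings L" "take (revealed (hist p n) p) p = take (revealed (hist p n) p) p'"
  shows "revealed (hist p' n) p' = revealed (hist p n) p"
  using hist_cong[OF assms] revealed_cong[OF assms] by simp

lemma hist_completion:
  fixes p b :: "bool list" and n :: nat
  assumes p: "p \<in> bitstrings L" and b: "b \<in> bitstrings (L - revealed (hist p n) p)"
  defines "q \<equiv> take (revealed (hist p n) p) p @ b"
  shows "q \<in> bitstrings L" and "hist q n = hist p n" and "revealed (hist p n) q = revealed (hist p n) p"
proof -
  have k: "revealed (hist p n) p \<le> L" by (rule revealed_le)
  then show q: "q \<in> bitstrings L" using p b unfolding q_def bitstrings_def by simp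
  have "take (revealed (hist p n) p) p = take (revealed (hist p n) p) q"
    using p k unfolding q_def bitstrings_def by simp
  then show "hist q n = hist p n" and "revealed (hist p n) q = revealed (hist p n) p"
    using hist_cong[OF p q] revealed_cong[OF p q] by simp_all
qed

lemma sum_bitstrings_stopped_revealed:
  fixes F :: "bool list \<Rightarrow> real"
  shows "(\<Sum>p \<in> bitstrings L. (\<Sum>b \<in> bitstrings (L - revealed (hist p n) p). F (take (revealed (hist p n) p) p @ b))
      / 2 ^ (L - revealed (hist p n) p)) = (\<Sum>p \<in> bitstrings L. F p)"
  by (rule sum_bitstrings_stopped[OF revealed_le revealed_hist_cong])

text \<open>Each expensive query divides the potential by \<open>theta\<close> and, averaged over the unrevealed
  bits, multiplies \<open>\<rho>\<^bsup>revealed\<^esup>\<close> by at least \<open>theta\<close> (\<open>sum_power_revealed_bits_ge\<close>);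
  so the total potential never decreases.\<close>
definition potential :: "nat \<Rightarrow> bool list \<Rightarrow> real" where
  "potential n p = \<rho> ^ revealed (hist p n) p / theta ^ n_expensive (hist p n)"

lemma potential_Suc_completion:
  fixes p b :: "bool list" and n :: nat
  assumes p: "p \<in> bitstrings L" and b: "b \<in> bitstrings (L - revealed (hist p n) p)"
    and xz: "Q (hist p n) = (x, z)"
  defines "q \<equiv> take (revealed (hist p n) p) p @ b"
  shows "hist_cost lam (hist p n) + lam z \<le> \<Lambda> \<Longrightarrow> inv_Phibar as t \<le> ereal (lam z) \<Longrightarrow>
      potential (Suc n) q = \<rho> ^ max (revealed (hist p n) p) (revealed_bits x q) / theta ^ Suc (n_expensive (hist p n))"
    and "\<not> (hist_cost lam (hist p n) + lam z \<le> \<Lambda> \<and> inv_Phibar as t \<le> ereal (lam z)) \<Longrightarrow>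
      potential (Suc n) q = potential n p"
proof -
  have H: "hist q n = hist p n" and k: "revealed (hist p n) q = revealed (hist p n) p"
    using hist_completion[OF p b] unfolding q_def by simp_all
  let ?e = "(x, z, masked_fidelities as lam t (plateau_fun m 1) (peak_fun m 1 (leaf q)) z x)"
  have accepted: "hist q (Suc n) = hist p n @ [?e]" if "hist_cost lam (hist p n) + lam z \<le> \<Lambda>"
    using that xz H by (simp add: hist_Suc)
  show "potential (Suc n) q = \<rho> ^ max (revealed (hist p n) p) (revealed_bits x q) / theta ^ Suc (n_expensive (hist p n))"
    if "hist_cost lam (hist p n) + lam z \<le> \<Lambda>" "inv_Phibar as t \<le> ereal (lam z)"
    using accepted[OF that(1)] that(2) k unfolding potential_def
    by (simp add: revealed_snoc n_expensive_def expensive_def)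
  show "potential (Suc n) q = potential n p"
    if "\<not> (hist_cost lam (hist p n) + lam z \<le> \<Lambda> \<and> inv_Phibar as t \<le> ereal (lam z))"
  proof (cases "hist_cost lam (hist p n) + lam z \<le> \<Lambda>")
    case True
    then show ?thesis using accepted[OF True] that k unfolding potential_def
      by (simp add: revealed_snoc n_expensive_def expensive_def)
  next
    case False
    then show ?thesis using xz H k unfolding potential_def by (simp add: hist_Suc)
  qed
qed

lemma potential_le_average:
  fixes p :: "bool list" and n :: nat
  assumes p: "p \<in> bitstrings L"
  defines "k \<equiv> revealed (hist p n) p"
  shows "potential n p \<le> (\<Sum>b \<in> bitstrings (L - k). potential (Suc n) (take k p @ b)) / 2 ^ (L - k)"
proof -
  obtain x z where xz: "Q (hist p n) = (x, z)" by fastforce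
  have a: "length (take k p) = k" and kL: "k \<le> L"
    using p revealed_le[of "hist p n" p] unfolding k_def bitstrings_def by simp_all
  show ?thesis
  proof (cases "hist_cost lam (hist p n) + lam z \<le> \<Lambda> \<and> inv_Phibar as t \<le> ereal (lam z)")
    case True
    let ?s = "theta ^ Suc (n_expensive (hist p n))"
    have "potential n p * 2 ^ (L - k) = 2 ^ (L - k) * theta * \<rho> ^ k / ?s"
      using theta_pos unfolding potential_def k_def by (simp add: field_simps)
    also have "\<dots> \<le> (\<Sum>b \<in> bitstrings (L - k). \<rho> ^ max k (revealed_bits x (take k p @ b))) / ?s"
      using sum_power_revealed_bits_ge[OF a kL, of x, folded theta_def] theta_pos
      by (intro divide_right_mono) auto
    also have "\<dots> = (\<Sum>b \<in> bitstrings (L - k). potential (Suc n) (take k p @ b))"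
      using potential_Suc_completion(1)[OF p _ xz] True unfolding k_def by (simp add: sum_divide_distrib)
    finally show ?thesis by (simp add: field_simps)
  next
    case False
    then have "potential (Suc n) (take k p @ b) = potential n p" if "b \<in> bitstrings (L - k)" for b
      using potential_Suc_completion(2)[OF p _ xz] that False unfolding k_def by blast
    then have "(\<Sum>b \<in> bitstrings (L - k). potential (Suc n) (take k p @ b)) = 2 ^ (L - k) * potential n p"
      by (simp add: card_bitstrings)
    then show ?thesis by simp
  qed
qed

lemma sum_potential_ge: "2 ^ L \<le> (\<Sum>p \<in> bitstrings L. potential n p)"
proof (induction n)
  case 0
  then show ?case by (simp add: potential_def hist_def revealed_def n_expensive_def card_bitstrings)
next
  case (Suc n)
  have "(\<Sum>p \<in> bitstrings L. potential n p) \<le> (\<Sum>p \<in> bitstrings L.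
      (\<Sum>b \<in> bitstrings (L - revealed (hist p n) p). potential (Suc n) (take (revealed (hist p n) p) p @ b))
        / 2 ^ (L - revealed (hist p n) p))"
    using potential_le_average by (rule sum_mono)
  then show ?case using Suc sum_bitstrings_stopped_revealed by simp
qed

lemma sum_rho_power_revealed_ge:
  assumes q: "\<And>p. p \<in> bitstrings L \<Longrightarrow> n_expensive (hist p n) \<le> q"
  shows "theta ^ q * 2 ^ L \<le> (\<Sum>p \<in> bitstrings L. \<rho> ^ revealed (hist p n) p)"
proof -
  have "potential n p \<le> \<rho> ^ revealed (hist p n) p / theta ^ q" if "p \<in> bitstrings L" for p
  proof -
    have "theta ^ q \<le> theta ^ n_expensive (hist p n)"
      using theta_pos theta_le_1 q[OF that] by (intro power_decreasing) auto
    then show ?thesis unfolding potential_def using theta_pos rho_pos by (intro divide_left_mono) auto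
  qed
  then have "2 ^ L \<le> (\<Sum>p \<in> bitstrings L. \<rho> ^ revealed (hist p n) p / theta ^ q)"
    using sum_potential_ge[of n] sum_mono[of "bitstrings L" "potential n"] by (meson order_trans)
  then show ?thesis using theta_pos by (simp add: sum_divide_distrib[symmetric] field_simps)
qed

lemma sum_rho_power_output_ge:
  fixes y :: "'x hist \<Rightarrow> 'x"
  shows "theta * (\<Sum>p \<in> bitstrings L. \<rho> ^ revealed (hist p n) p)
    \<le> (\<Sum>p \<in> bitstrings L. \<rho> ^ max (revealed (hist p n) p) (revealed_bits (y (hist p n)) p))"
proof -
  define F where "F p = \<rho> ^ max (revealed (hist p n) p) (revealed_bits (y (hist p n)) p)" for p
  have "theta * \<rho> ^ revealed (hist p n) p \<le>
      (\<Sum>b \<in> bitstrings (L - revealed (hist p n) p). F (take (revealed (hist p n) p) p @ b)) / 2 ^ (L - revealed (hist p n) p)"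
    if p: "p \<in> bitstrings L" for p
  proof -
    define k where "k = revealed (hist p n) p"
    have a: "length (take k p) = k" and kL: "k \<le> L"
      using p revealed_le[of "hist p n" p] unfolding k_def bitstrings_def by simp_all
    have "F (take k p @ b) = \<rho> ^ max k (revealed_bits (y (hist p n)) (take k p @ b))"
      if "b \<in> bitstrings (L - k)" for b
      using hist_completion[OF p that[unfolded k_def]] unfolding F_def k_def by simp
    then have "(\<Sum>b \<in> bitstrings (L - k). F (take k p @ b))
        = (\<Sum>b \<in> bitstrings (L - k). \<rho> ^ max k (revealed_bits (y (hist p n)) (take k p @ b)))"
      by (rule sum.cong[OF refl])
    also have "\<dots> \<ge> 2 ^ (L - k) * theta * \<rho> ^ k"
      using sum_power_revealed_bits_ge[OF a kL, folded theta_def] .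
    finally show ?thesis unfolding k_def[symmetric] by (simp add: field_simps)
  qed
  then have "(\<Sum>p \<in> bitstrings L. theta * \<rho> ^ revealed (hist p n) p) \<le> (\<Sum>p \<in> bitstrings L.
      (\<Sum>b \<in> bitstrings (L - revealed (hist p n) p). F (take (revealed (hist p n) p) p @ b)) / 2 ^ (L - revealed (hist p n) p))"
    by (rule sum_mono)
  also have "\<dots> = (\<Sum>p \<in> bitstrings L. F p)" by (rule sum_bitstrings_stopped_revealed)
  finally show ?thesis unfolding F_def by (simp add: sum_distrib_left)
qed

lemma sum_peak_regret_ge:
  fixes y :: "'x hist \<Rightarrow> 'x"
  assumes q: "\<And>p. p \<in> bitstrings L \<Longrightarrow> n_expensive (hist p n) \<le> q"
  shows "2 ^ L * (\<nu> * (\<rho> ^ m * theta ^ Suc q - \<rho> ^ (m + L)))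
    \<le> (\<Sum>p \<in> bitstrings L. - peak_fun m 1 (leaf p) (y (hist p n)))"
proof -
  define Y where "Y p = \<rho> ^ max (revealed (hist p n) p) (revealed_bits (y (hist p n)) p)" for p
  have "theta * (theta ^ q * 2 ^ L) \<le> (\<Sum>p \<in> bitstrings L. Y p)"
    using sum_rho_power_revealed_ge[OF q] sum_rho_power_output_ge[of n y] theta_pos unfolding Y_def
    by (meson mult_left_mono less_imp_le order_trans)
  then have "\<nu> * \<rho> ^ m * (theta * (theta ^ q * 2 ^ L)) \<le> \<nu> * \<rho> ^ m * (\<Sum>p \<in> bitstrings L. Y p)"
    using nu_pos rho_pos by (intro mult_left_mono) auto
  moreover have "2 ^ L * (\<nu> * (\<rho> ^ m * theta ^ Suc q - \<rho> ^ (m + L)))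
      = \<nu> * \<rho> ^ m * (theta * (theta ^ q * 2 ^ L)) - 2 ^ L * (\<nu> * \<rho> ^ (m + L))"
    by (simp add: algebra_simps)
  moreover have "(\<Sum>p \<in> bitstrings L. \<nu> * \<rho> ^ m * Y p - \<nu> * \<rho> ^ (m + L))
      = \<nu> * \<rho> ^ m * (\<Sum>p \<in> bitstrings L. Y p) - 2 ^ L * (\<nu> * \<rho> ^ (m + L))"
    by (simp add: sum_subtractf sum_distrib_left card_bitstrings)
  ultimately have "2 ^ L * (\<nu> * (\<rho> ^ m * theta ^ Suc q - \<rho> ^ (m + L)))
      \<le> (\<Sum>p \<in> bitstrings L. \<nu> * \<rho> ^ m * Y p - \<nu> * \<rho> ^ (m + L))"
    by linarith
  also have "\<dots> \<le> (\<Sum>p \<in> bitstrings L. - peak_fun m 1 (leaf p) (y (hist p n)))"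
  proof (rule sum_mono)
    fix p assume p: "p \<in> bitstrings L"
    have "Y p \<le> \<rho> ^ revealed_bits (y (hist p n)) p"
      unfolding Y_def using rho_pos rho_less_1 by (intro power_decreasing) auto
    then have "\<nu> * \<rho> ^ m * Y p \<le> \<nu> * \<rho> ^ (m + revealed_bits (y (hist p n)) p)"
      using nu_pos rho_pos by (simp add: power_add mult_left_mono)
    then show "\<nu> * \<rho> ^ m * Y p - \<nu> * \<rho> ^ (m + L) \<le> - peak_fun m 1 (leaf p) (y (hist p n))"
      using peak_regret_ge[OF p, of "y (hist p n)"] by (simp add: right_diff_distrib)
  qed
  finally show ?thesis .
qed

lemma tree_regret_sum_ge:
  fixes out :: "'x hist \<Rightarrow> 'x"
  assumes lam: "bij_betw lam {0..1} {1..}" and Q: "\<And>H. snd (Q H) \<in> {0..1}"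
    and budget: "ereal \<Lambda> \<le> ereal F * inv_Phibar as t"
  defines "R \<equiv> \<nu> * (\<rho> ^ m * theta ^ Suc (nat \<lfloor>F\<rfloor>) - \<rho> ^ (m + L))"
  shows "of_nat (card (bitstrings L)) * ennreal R \<le> (\<Sum>p \<in> bitstrings L.
      ennreal (Sup (range (peak_fun m 1 (leaf p))) - peak_fun m 1 (leaf p)
        (out (final_hist lam \<Lambda> (masked_fidelities as lam t (plateau_fun m 1) (peak_fun m 1 (leaf p))) Q))))"
proof -
  define N where "N = nat \<lfloor>\<Lambda>\<rfloor> + 1"
  have final: "final_hist lam \<Lambda> (masked_fidelities as lam t (plateau_fun m 1) (peak_fun m 1 (leaf p))) Q
      = hist p N" for p
    unfolding final_hist_def hist_def N_def ..
  have "n_expensive (hist p N) \<le> nat \<lfloor>F\<rfloor>" for p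
  proof -
    have "real (n_expensive (hist p N)) \<le> max 0 F"
      unfolding n_expensive_def expensive_def hist_def by (rule length_filter_expensive_le[OF lam Q budget])
    then show ?thesis by (cases "F < 0") (auto simp: le_nat_floor)
  qed
  then have "2 ^ L * R \<le> (\<Sum>p \<in> bitstrings L. - peak_fun m 1 (leaf p) (out (hist p N)))"
    unfolding R_def by (rule sum_peak_regret_ge)
  then have "ennreal (2 ^ L * R) \<le> ennreal (\<Sum>p \<in> bitstrings L. - peak_fun m 1 (leaf p) (out (hist p N)))"
    by (rule ennreal_leI)
  also have "\<dots> = (\<Sum>p \<in> bitstrings L. ennreal (- peak_fun m 1 (leaf p) (out (hist p N))))"
    by (rule sum_ennreal[symmetric]) (simp add: peak_fun_le_0)
  finally have "ennreal (2 ^ L * R) \<le> (\<Sum>p \<in> bitstrings L. ennreal (- peak_fun m 1 (leaf p) (out (hist p N))))" .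
  moreover have "of_nat (card (bitstrings L)) * ennreal R \<le> ennreal (2 ^ L * R)"
  proof (cases "0 \<le> R")
    case True
    then show ?thesis by (simp add: card_bitstrings ennreal_mult ennreal_of_nat_eq_real_of_nat)
  next
    case False
    then show ?thesis by (simp add: ennreal_neg)
  qed
  ultimately show ?thesis unfolding final Sup_range_peak_fun by simp
qed

end

context tree_instances
begin

lemma tree_instance_regret_ge:
  fixes Q :: "'w \<Rightarrow> 'x hist \<Rightarrow> 'x \<times> real" and out :: "'w \<Rightarrow> 'x hist \<Rightarrow> 'x"
  assumes as: "asm_params_ok as" and lam: "bij_betw lam {0..1} {1..}" and M: "prob_space M"
    and Q: "\<And>w H. snd (Q w H) \<in> {0..1}"
    and t: "\<nu> * \<rho> ^ m \<le> t" and budget: "ereal \<Lambda> \<le> ereal F * inv_Phibar as t"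
  shows "\<exists>f \<in> fun_class K P \<nu> \<rho> d C. \<exists>fz \<in> fid_class as f lam.
    ennreal (\<nu> * (\<rho> ^ m * theta ^ Suc (nat \<lfloor>F\<rfloor>) - \<rho> ^ (m + L))) \<le> simple_regret M Q out lam \<Lambda> f fz"
proof (rule exists_masked_instance_regret_ge[OF as lam M finite_bitstrings bitstrings_nonempty,
      where f="\<lambda>p. peak_fun m 1 (leaf p)" and g="plateau_fun m 1"])
  fix p assume p: "p \<in> bitstrings L"
  have leaf: "cell_of m (leaf p) < 1" using cell_of_leaf_le[OF p, of m] by simp
  have "1 \<le> K ^ (m - g) * nat \<lfloor>\<rho> powr (- d * real g)\<rfloor>" for g
  proof -
    have "1 \<le> \<lfloor>\<rho> powr (- d * real g)\<rfloor>" using rho_powr_neg_ge_1[of g] by simp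
    then have "1 \<le> nat \<lfloor>\<rho> powr (- d * real g)\<rfloor>" by linarith
    moreover have "1 \<le> K ^ (m - g)" using K_pos by simp
    ultimately show ?thesis by (simp add: one_le_mult_iff)
  qed
  then show "peak_fun m 1 (leaf p) \<in> fun_class K P \<nu> \<rho> d C"
    by (rule peak_fun_in_fun_class[OF _ leaf])
  show "\<bar>peak_fun m 1 (leaf p) x - plateau_fun m 1 x\<bar> \<le> t" for x
    using abs_peak_fun_minus_plateau_fun_le[OF leaf, of x] t by linarith
next
  fix w
  interpret run: tree_run K P \<nu> \<rho> d C m L as lam t \<Lambda> "Q w" by unfold_locales
  show "of_nat (card (bitstrings L)) * ennreal (\<nu> * (\<rho> ^ m * theta ^ Suc (nat \<lfloor>F\<rfloor>) - \<rho> ^ (m + L)))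
    \<le> (\<Sum>p \<in> bitstrings L. ennreal (Sup (range (peak_fun m 1 (leaf p))) - peak_fun m 1 (leaf p)
        (out w (final_hist lam \<Lambda> (masked_fidelities as lam t (plateau_fun m 1) (peak_fun m 1 (leaf p))) (Q w)))))"
    by (rule run.tree_regret_sum_ge[OF lam Q[of w] budget])
qed

end

lemma nat_ceiling_floor_bound:
  fixes h :: real
  assumes "3 / 2 \<le> h"
  shows "real (nat \<lceil>h - 1\<rceil> + 3 * nat \<lfloor>h - 2\<rfloor> + 3) \<le> 4 * h"
proof (cases "2 \<le> h")
  case True
  then show ?thesis using assms by linarith
next
  case False
  then have "nat \<lfloor>h - 2\<rfloor> = 0" by simp
  then show ?thesis using assms by linarith
qed

context regret_lower_bound
begin

definition tree_depth :: "real \<Rightarrow> real" where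
  "tree_depth r = ln (\<nu> / (4 * r)) / (4 * ln (1 / \<rho>))"

lemma powr_tree_depth: "0 < r \<Longrightarrow> (4 * r / \<nu>) powr (1 / 4) = \<rho> powr tree_depth r"
  using rho_pos nu_pos ln_inv_rho_pos
  by (simp add: powr_def tree_depth_def ln_div field_simps)

lemma eq_powr_tree_depth: "0 < r \<Longrightarrow> r = \<nu> / 4 * \<rho> powr (4 * tree_depth r)"
proof -
  assume r: "0 < r"
  have "\<rho> powr (4 * tree_depth r) = ((4 * r / \<nu>) powr (1 / 4)) powr 4"
    using powr_tree_depth[OF r] rho_pos by (simp add: powr_powr mult.commute)
  also have "\<dots> = 4 * r / \<nu>" using r nu_pos by (simp add: powr_powr)
  finally show ?thesis using nu_pos by simp
qed

lemma tree_depth_ge: "0 < r \<Longrightarrow> r \<le> \<nu> * \<rho> ^ 6 / 4 \<Longrightarrow> 3 / 2 \<le> tree_depth r"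
proof -
  assume r: "0 < r" "r \<le> \<nu> * \<rho> ^ 6 / 4"
  then have "(1 / \<rho>) ^ 6 \<le> \<nu> / (4 * r)" using nu_pos rho_pos by (simp add: field_simps power_divide)
  then have "ln ((1 / \<rho>) ^ 6) \<le> ln (\<nu> / (4 * r))" using rho_pos r nu_pos by (subst ln_le_cancel_iff) auto
  then have "6 * ln (1 / \<rho>) \<le> ln (\<nu> / (4 * r))" by (simp add: ln_realpow)
  then show ?thesis unfolding tree_depth_def using ln_inv_rho_pos by (simp add: field_simps)
qed

lemma tree_regret_value_ge:
  assumes L: "\<rho> ^ L < theta ^ Suc q / 2"
  shows "\<nu> / 2 * \<rho> ^ (m + 3 * Suc q) \<le> \<nu> * (\<rho> ^ m * theta ^ Suc q - \<rho> ^ (m + L))"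
proof -
  have "\<rho> ^ (m + L) \<le> \<rho> ^ m * (theta ^ Suc q / 2)"
    using L rho_pos by (simp add: power_add mult_left_mono)
  moreover have "(\<rho> ^ 3) ^ Suc q \<le> theta ^ Suc q"
    by (rule power_mono[OF rho_cube_le_theta]) (use rho_pos in simp)
  then have "\<rho> ^ (m + 3 * Suc q) \<le> \<rho> ^ m * theta ^ Suc q"
    using rho_pos by (simp add: power_add power_mult mult_left_mono)
  ultimately have "\<rho> ^ (m + 3 * Suc q) / 2 \<le> \<rho> ^ m * theta ^ Suc q - \<rho> ^ (m + L)" by simp
  then show ?thesis using nu_pos by (simp add: mult_left_mono)
qed

lemma le_rho_power_of_tree_depth:
  assumes r: "0 < r" "r \<le> \<nu> * \<rho> ^ 6 / 4"
    and n: "n \<le> nat \<lceil>tree_depth r - 1\<rceil> + 3 * nat \<lfloor>tree_depth r - 2\<rfloor>"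
  shows "r \<le> \<nu> / 2 * \<rho> ^ (n + 3)"
proof -
  have "real (n + 3) \<le> 4 * tree_depth r"
    using nat_ceiling_floor_bound[OF tree_depth_ge[OF r]] n by linarith
  then have "\<rho> powr (4 * tree_depth r) \<le> \<rho> ^ (n + 3)"
    using rho_pos rho_less_1 by (simp add: powr_mono' flip: powr_realpow)
  then have "r \<le> \<nu> / 4 * \<rho> ^ (n + 3)"
    using eq_powr_tree_depth[OF r(1)] nu_pos by (metis divide_pos_pos mult_left_mono less_imp_le zero_less_numeral)
  also have "\<dots> \<le> \<nu> / 2 * \<rho> ^ (n + 3)" using nu_pos rho_pos by (intro mult_right_mono) auto
  finally show ?thesis .
qed

lemma tree_lower_bound:
  fixes Q :: "'w \<Rightarrow> 'x hist \<Rightarrow> 'x \<times> real" and out :: "'w \<Rightarrow> 'x hist \<Rightarrow> 'x"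
  assumes as: "asm_params_ok as" and lam: "bij_betw lam {0..1} {1..}" and M: "prob_space M"
    and Q: "\<And>w H. snd (Q w H) \<in> {0..1}"
  shows "\<exists>f \<in> fun_class K P \<nu> \<rho> d C. \<exists>fz \<in> fid_class as f lam.
        simple_regret M Q out lam \<Lambda> f fz \<ge>
          (SUP r \<in> {r. 0 < r \<and> r \<le> \<nu> * \<rho> ^ 6 / 4 \<and>
                      ereal \<Lambda> \<le> ereal (ln (\<nu> / (4 * r)) / (4 * ln (1 / \<rho>)) - 2)
                                   * inv_Phibar as (\<nu> / \<rho> * (4 * r / \<nu>) powr (1 / 4))}. ennreal r)"
proof -
  define S where "S = {r. 0 < r \<and> r \<le> \<nu> * \<rho> ^ 6 / 4 \<and>
    ereal \<Lambda> \<le> ereal (ln (\<nu> / (4 * r)) / (4 * ln (1 / \<rho>)) - 2) * inv_Phibar as (\<nu> / \<rho> * (4 * r / \<nu>) powr (1 / 4))}"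
  define m where "m r = nat \<lceil>tree_depth r - 1\<rceil>" for r
  define q where "q r = nat \<lfloor>tree_depth r - 2\<rfloor>" for r
  have "\<exists>f \<in> fun_class K P \<nu> \<rho> d C. \<exists>fz \<in> fid_class as f lam.
          (SUP r \<in> S. ennreal r) \<le> simple_regret M Q out lam \<Lambda> f fz"
  proof (rule exists_ge_SUP[OF fun_class_fid_class_nonempty[OF as lam]])
    assume "S \<noteq> {}"
    then obtain r where r: "r \<in> S" and least: "\<And>r'. r' \<in> S \<Longrightarrow> m r + 3 * q r \<le> m r' + 3 * q r'"
      using ex_has_least_nat[of "\<lambda>r. r \<in> S" _ "\<lambda>r. m r + 3 * q r"] by blast
    have r_pos: "0 < r" and budget: "ereal \<Lambda> \<le> ereal (tree_depth r - 2) * inv_Phibar as (\<nu> / \<rho> * (4 * r / \<nu>) powr (1 / 4))"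
      using r unfolding S_def tree_depth_def by auto
    have "tree_depth r - 1 \<le> real (m r)" unfolding m_def by linarith
    then have "\<rho> powr real (m r) \<le> \<rho> powr (tree_depth r - 1)"
      using rho_pos rho_less_1 by (intro powr_mono') auto
    then have "\<rho> ^ m r \<le> \<rho> powr (tree_depth r - 1)" using rho_pos by (simp add: powr_realpow)
    then have t: "\<nu> * \<rho> ^ m r \<le> \<nu> / \<rho> * (4 * r / \<nu>) powr (1 / 4)"
      using nu_pos rho_pos powr_tree_depth[OF r_pos] by (simp add: powr_diff field_simps)
    obtain L where L: "\<rho> ^ L < theta ^ Suc (q r) / 2"
      using real_arch_pow_inv[OF _ rho_less_1] theta_pos by (metis half_gt_zero zero_less_power)
    interpret tree_instances K P \<nu> \<rho> d C "m r" L by unfold_locales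
    have "\<exists>f \<in> fun_class K P \<nu> \<rho> d C. \<exists>fz \<in> fid_class as f lam.
        ennreal (\<nu> * (\<rho> ^ m r * theta ^ Suc (q r) - \<rho> ^ (m r + L))) \<le> simple_regret M Q out lam \<Lambda> f fz"
      using tree_instance_regret_ge[OF as lam M Q t budget] unfolding q_def by simp
    moreover have "ennreal (\<nu> / 2 * \<rho> ^ (m r + 3 * Suc (q r))) \<le> ennreal (\<nu> * (\<rho> ^ m r * theta ^ Suc (q r) - \<rho> ^ (m r + L)))"
      using tree_regret_value_ge[OF L] by (rule ennreal_leI)
    moreover have "r' \<le> \<nu> / 2 * \<rho> ^ (m r + 3 * Suc (q r))" if "r' \<in> S" for r'
      using le_rho_power_of_tree_depth[of r' "m r + 3 * q r"] least[OF that] that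
      unfolding S_def m_def q_def by (simp add: algebra_simps)
    ultimately show "\<exists>v. (\<forall>r \<in> S. r \<le> v) \<and> (\<exists>f \<in> fun_class K P \<nu> \<rho> d C. \<exists>fz \<in> fid_class as f lam.
        ennreal v \<le> simple_regret M Q out lam \<Lambda> f fz)"
      by (meson order_trans)
  qed
  then show ?thesis unfolding S_def by simp
qed

end

theorem lemma6:
  fixes K :: nat and P :: "nat \<Rightarrow> nat \<Rightarrow> 'x set"
    and \<nu> \<rho> d C :: real
    and as :: asm and lam :: "real \<Rightarrow> real"
    and M :: "'w measure" and Q :: "'w \<Rightarrow> 'x hist \<Rightarrow> 'x \<times> real" and out :: "'w \<Rightarrow> 'x hist \<Rightarrow> 'x"
    and \<Lambda> :: real
  assumes K: "K \<ge> 2"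
    and part: "hier_partition K P"
    and \<nu>: "\<nu> > 0"
    and \<rho>: "0 < \<rho>" "\<rho> < 1"
    and d: "0 \<le> d" "d \<le> ln (real K) / ln (1 / \<rho>)"
    and C: "C \<ge> (real K * \<rho> powr d) ^ nat \<lfloor>ln 3 / ln (1 / \<rho>)\<rfloor>" "C > 1"
    and as: "asm_params_ok as"
    and lam: "bij_betw lam {0..1} {1..}"
    and M: "prob_space M"
    and Q: "\<And>w H. snd (Q w H) \<in> {0..1}"
  shows
    "(\<exists>f \<in> fun_class K P \<nu> \<rho> d C. \<exists>fz \<in> fid_class as f lam.
        simple_regret M Q out lam \<Lambda> f fz \<ge>
          (SUP r \<in> {r. 0 < r \<and> r \<le> \<nu> * \<rho> / 2 \<and>
                      ereal \<Lambda> \<le> ereal (1 / real K * (2 * r / (\<nu> * \<rho>)) powr (- d))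
                                   * inv_Phibar as (2 * r / \<rho>)}. ennreal r))
     \<and>
     (\<exists>f \<in> fun_class K P \<nu> \<rho> d C. \<exists>fz \<in> fid_class as f lam.
        simple_regret M Q out lam \<Lambda> f fz \<ge>
          (SUP r \<in> {r. 0 < r \<and> r \<le> \<nu> * \<rho> ^ 6 / 4 \<and>
                      ereal \<Lambda> \<le> ereal (ln (\<nu> / (4 * r)) / (4 * ln (1 / \<rho>)) - 2)
                                   * inv_Phibar as (\<nu> / \<rho> * (4 * r / \<nu>) powr (1 / 4))}. ennreal r))"
proof -
  interpret regret_lower_bound K P \<nu> \<rho> d C
    by unfold_locales (use K part \<nu> \<rho> d C in auto)
  show ?thesis
    by (intro conjI plateau_lower_bound[OF as lam M Q] tree_lower_bound[OF as lam M Q])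
qed

end
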